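(* Let $\pi,\sigma\in\mathrm{KP}(\theta)$, $i\in[a,b]\setminus C_\pi$, and suppose $\sigma\supseteq\mathrm{refn}^i(\pi)$. Then in $R_\theta$ $$\psi_{w(\mathrm{refn}^i(\pi),\pi)}\,\psi_{w(\pi,\sigma)}\,e_\sigma=\psi_{w(\mathrm{refn}^i(\pi),\sigma)}\big(y_{\mathrm{idx}_\sigma(i)}-y_{\mathrm{idx}_\sigma(i+1)}\big)e_\sigma.$$
   Context: $\Bbbk$ is a PID; $R_\theta$ is the KLR algebra of type $A_\infty$ over $\Bbbk$ with the standard relations, in particular $\psi_r^21_{\mathbf i}=(i_{r+1}-i_r)(y_r-y_{r+1})1_{\mathbf i}$ if $|i_r-i_{r+1}|=1$. $\theta=\alpha_a+\dots+\alpha_{b+1}$ ($a\le b+1$), $l=b+2-a$. Kostant partitions $\pi=(\pi_1,\dots,\pi_u)$ of $\theta$ are lexicographically decreasing sequences of positive roots whose supports are consecutive intervals partitioning $[a,b+1]$; $C_\pi:=\{\max\mathrm{supp}\,\pi_2,\dots,\max\mathrm{supp}\,\pi_u\}\subseteq[a,b]$ (a bijection onto subsets of $[a,b]$); $\tau\supseteq\pi$ iff $C_\tau\supseteq C_\pi$; for $i\notin C_\pi$, $\mathrm{refn}^i(\pi)$ is the Kostant partition with $C=C_\pi\cup\{i\}$. $\mathbf j_\pi=\mathbf j_{\pi_1}\cdots\mathbf j_{\pi_u}$ with $\mathbf j_{\alpha_i+\dots+\alpha_j}=i(i+1)\cdots j$ (a word with distinct letters $a,\dots,b+1$); $e_\pi=1_{\mathbf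 j_\pi}$; $w(\tau,\pi)\in S_l$ is the unique permutation with $w(\tau,\pi)\cdot\mathbf j_\pi=\mathbf j_\tau$ (place permutation $w\cdot\mathbf i=i_{w^{-1}(1)}\cdots$); $\psi_w1_{\mathbf j_\pi}$ is independent of the reduced expression. $\mathrm{idx}_\sigma(i)$ is the position of the letter $i$ in $\mathbf j_\sigma$. *)

theory Defs
  imports Main "HOL-Library.Multiset"
begin

definition is_ideal :: "'k::comm_ring_1 set \<Rightarrow> bool" where
  "is_ideal S \<longleftrightarrow> 0 \<in> S \<and> (\<forall>x\<in>S. \<forall>y\<in>S. x + y \<in> S) \<and> (\<forall>x\<in>S. \<forall>r. r * x \<in> S)"

definition is_PID :: "'k::idom itself \<Rightarrow> bool" where
  "is_PID _ \<longleftrightarrow> (\<forall>S :: 'k set. is_ideal S \<longrightarrow> (\<exists>g. S = {r * g | r. True}))"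

text \<open>Formal expressions in the generators e(i) (idempotents 1_i), y_r, psi_r
  (positions 1-based), the unit, zero and scalars of k.\<close>

datatype 'k kexp =
    E "int list" | Y nat | Psi nat | One | Zero | Sc 'k
  | Plus "'k kexp" "'k kexp" | Times "'k kexp" "'k kexp" | Neg "'k kexp"

abbreviation Minus :: "'k kexp \<Rightarrow> 'k kexp \<Rightarrow> 'k kexp" where
  "Minus x y \<equiv> Plus x (Neg y)"

definition ksum :: "'k kexp list \<Rightarrow> 'k kexp" where
  "ksum xs = foldr Plus xs Zero"

definition kprod :: "'k kexp list \<Rightarrow> 'k kexp" where
  "kprod xs = foldr Times xs One"

text \<open>Words of weight theta (theta given as the multiset of its simple-root letters).\<close>
definition words :: "int multiset \<Rightarrow> int list set" where
  "words \<theta> = {w. mset w = \<theta>}"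

abbreviation lt :: "int list \<Rightarrow> nat \<Rightarrow> int" where
  "lt w r \<equiv> w ! (r - 1)"

definition swapw :: "nat \<Rightarrow> int list \<Rightarrow> int list" where
  "swapw r w = w[r - 1 := w ! r, r := w ! (r - 1)]"

text \<open>Q-polynomial Q_{i_r,i_{r+1}}(y_r,y_{r+1}) for type A_infinity, so that
  psi_r^2 1_i = (i_{r+1}-i_r)(y_r - y_{r+1}) 1_i if |i_r - i_{r+1}| = 1.\<close>
definition Qexp :: "int \<Rightarrow> int \<Rightarrow> nat \<Rightarrow> ('k::comm_ring_1) kexp" where
  "Qexp i j r = (if i = j then Zero
     else if \<bar>i - j\<bar> = 1 then Times (Sc (of_int (j - i))) (Minus (Y r) (Y (r + 1)))
     else One)"

definition dlt :: "int \<Rightarrow> int \<Rightarrow> ('k::comm_ring_1) kexp" where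
  "dlt i j = (if i = j then One else Zero)"

text \<open>braid correction term (Q_{i_r i_{r+1}}(y_{r+2},y_{r+1}) - Q_{i_r i_{r+1}}(y_r,y_{r+1}))/(y_{r+2}-y_r)
  when i_r = i_{r+2}\<close>
definition braidcorr :: "int \<Rightarrow> int \<Rightarrow> int \<Rightarrow> ('k::comm_ring_1) kexp" where
  "braidcorr i j k = (if i = k \<and> \<bar>i - j\<bar> = 1 then Sc (of_int (j - i)) else Zero)"

text \<open>keq theta x y: x and y are equal in R_theta, i.e. the smallest congruence
  of associative unital k-algebras containing the KLR relations.\<close>
inductive keq :: "int multiset \<Rightarrow> ('k::comm_ring_1) kexp \<Rightarrow> 'k kexp \<Rightarrow> bool" for \<theta> where
  refl: "keq \<theta> x x"
| sym: "keq \<theta> x y \<Longrightarrow> keq \<theta> y x"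
| trans: "keq \<theta> x y \<Longrightarrow> keq \<theta> y z \<Longrightarrow> keq \<theta> x z"
| cong_plus: "keq \<theta> x x' \<Longrightarrow> keq \<theta> y y' \<Longrightarrow> keq \<theta> (Plus x y) (Plus x' y')"
| cong_times: "keq \<theta> x x' \<Longrightarrow> keq \<theta> y y' \<Longrightarrow> keq \<theta> (Times x y) (Times x' y')"
| cong_neg: "keq \<theta> x x' \<Longrightarrow> keq \<theta> (Neg x) (Neg x')"
| plus_assoc: "keq \<theta> (Plus (Plus x y) z) (Plus x (Plus y z))"
| plus_comm: "keq \<theta> (Plus x y) (Plus y x)"
| plus_zero: "keq \<theta> (Plus x Zero) x"
| plus_neg: "keq \<theta> (Plus x (Neg x)) Zero"
| times_assoc: "keq \<theta> (Times (Times x y) z) (Times x (Times y z))"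
| times_one_l: "keq \<theta> (Times One x) x"
| times_one_r: "keq \<theta> (Times x One) x"
| distrib_l: "keq \<theta> (Times x (Plus y z)) (Plus (Times x y) (Times x z))"
| distrib_r: "keq \<theta> (Times (Plus x y) z) (Plus (Times x z) (Times y z))"
| sc_plus: "keq \<theta> (Sc (c + d)) (Plus (Sc c) (Sc d))"
| sc_times: "keq \<theta> (Sc (c * d)) (Times (Sc c) (Sc d))"
| sc_one: "keq \<theta> (Sc 1) One"
| sc_central: "keq \<theta> (Times (Sc c) x) (Times x (Sc c))"
  (* generators out of range are zero (convention) *)
| e_out: "i \<notin> words \<theta> \<Longrightarrow> keq \<theta> (E i) Zero"
| y_out: "r < 1 \<or> r > size \<theta> \<Longrightarrow> keq \<theta> (Y r) Zero"
| psi_out: "r < 1 \<or> r + 1 > size \<theta> \<Longrightarrow> keq \<theta> (Psi r) Zero"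
| idem: "i \<in> words \<theta> \<Longrightarrow> j \<in> words \<theta> \<Longrightarrow>
      keq \<theta> (Times (E i) (E j)) (if i = j then E i else Zero)"
| unit_sum: "distinct ws \<Longrightarrow> set ws = words \<theta> \<Longrightarrow> keq \<theta> One (ksum (map E ws))"
| y_e: "i \<in> words \<theta> \<Longrightarrow> 1 \<le> r \<Longrightarrow> r \<le> size \<theta> \<Longrightarrow>
      keq \<theta> (Times (Y r) (E i)) (Times (E i) (Y r))"
| psi_e: "i \<in> words \<theta> \<Longrightarrow> 1 \<le> r \<Longrightarrow> r + 1 \<le> size \<theta> \<Longrightarrow>
      keq \<theta> (Times (Psi r) (E i)) (Times (E (swapw r i)) (Psi r))"
| y_y: "keq \<theta> (Times (Y r) (Y s)) (Times (Y s) (Y r))"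
| psi_y: "s \<noteq> r \<Longrightarrow> s \<noteq> r + 1 \<Longrightarrow> keq \<theta> (Times (Psi r) (Y s)) (Times (Y s) (Psi r))"
| psi_psi: "r + 1 < s \<or> s + 1 < r \<Longrightarrow> keq \<theta> (Times (Psi r) (Psi s)) (Times (Psi s) (Psi r))"
| psi_y1: "i \<in> words \<theta> \<Longrightarrow> 1 \<le> r \<Longrightarrow> r + 1 \<le> size \<theta> \<Longrightarrow>
      keq \<theta> (Times (Times (Psi r) (Y (r + 1))) (E i))
              (Times (Plus (Times (Y r) (Psi r)) (dlt (lt i r) (lt i (r + 1)))) (E i))"
| y1_psi: "i \<in> words \<theta> \<Longrightarrow> 1 \<le> r \<Longrightarrow> r + 1 \<le> size \<theta> \<Longrightarrow>
      keq \<theta> (Times (Times (Y (r + 1)) (Psi r)) (E i))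
              (Times (Plus (Times (Psi r) (Y r)) (dlt (lt i r) (lt i (r + 1)))) (E i))"
| psi_sq: "i \<in> words \<theta> \<Longrightarrow> 1 \<le> r \<Longrightarrow> r + 1 \<le> size \<theta> \<Longrightarrow>
      keq \<theta> (Times (Times (Psi r) (Psi r)) (E i)) (Times (Qexp (lt i r) (lt i (r + 1)) r) (E i))"
| braid: "i \<in> words \<theta> \<Longrightarrow> 1 \<le> r \<Longrightarrow> r + 2 \<le> size \<theta> \<Longrightarrow>
      keq \<theta> (Times (Times (Times (Psi (r + 1)) (Psi r)) (Psi (r + 1))) (E i))
              (Times (Plus (Times (Times (Psi r) (Psi (r + 1))) (Psi r))
                           (braidcorr (lt i r) (lt i (r + 1)) (lt i (r + 2)))) (E i))"

definition theta :: "int \<Rightarrow> int \<Rightarrow> int multiset" where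
  "theta a b = mset [a..b + 1]"

text \<open>A positive root alpha_s + ... + alpha_e (s \<le> e) is the pair (s,e).\<close>

definition jw :: "(int \<times> int) list \<Rightarrow> int list" where
  "jw \<pi> = concat (map (\<lambda>(s, e). [s..e]) \<pi>)"

definition KP :: "int \<Rightarrow> int \<Rightarrow> (int \<times> int) list set" where
  "KP a b = {\<pi>. (\<forall>(s, e) \<in> set \<pi>. s \<le> e)
     \<and> sorted_wrt (\<lambda>(s1, e1) (s2, e2). s1 > s2 \<or> (s1 = s2 \<and> e1 > e2)) \<pi>
     \<and> distinct (jw \<pi>) \<and> set (jw \<pi>) = {a..b + 1}}"

definition Cset :: "(int \<times> int) list \<Rightarrow> int set" where
  "Cset \<pi> = snd ` set (tl \<pi>)"

definition refn :: "int \<Rightarrow> int \<Rightarrow> int \<Rightarrow> (int \<times> int) list \<Rightarrow> (int \<times> int) list" where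
  "refn a b i \<pi> = (THE \<tau>. \<tau> \<in> KP a b \<and> Cset \<tau> = Cset \<pi> \<union> {i})"

definition kp_contains :: "(int \<times> int) list \<Rightarrow> (int \<times> int) list \<Rightarrow> bool" where
  "kp_contains \<tau> \<pi> \<longleftrightarrow> Cset \<pi> \<subseteq> Cset \<tau>"

definition idx :: "(int \<times> int) list \<Rightarrow> int \<Rightarrow> nat" where
  "idx \<sigma> i = (THE k. 1 \<le> k \<and> k \<le> length (jw \<sigma>) \<and> jw \<sigma> ! (k - 1) = i)"

definition perms :: "nat \<Rightarrow> (nat \<Rightarrow> nat) set" where
  "perms l = {f. bij_betw f {1..l} {1..l} \<and> (\<forall>x. x \<notin> {1..l} \<longrightarrow> f x = x)}"

definition stp :: "nat \<Rightarrow> nat \<Rightarrow> nat" where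
  "stp r = id(r := r + 1, r + 1 := r)"

definition pact :: "(nat \<Rightarrow> nat) \<Rightarrow> int list \<Rightarrow> int list" where
  "pact w i = map (\<lambda>k. i ! (the_inv_into {1..length i} w k - 1)) [1..<length i + 1]"

definition wperm :: "nat \<Rightarrow> (int \<times> int) list \<Rightarrow> (int \<times> int) list \<Rightarrow> nat \<Rightarrow> nat" where
  "wperm l \<tau> \<pi> = (THE w. w \<in> perms l \<and> pact w (jw \<pi>) = jw \<tau>)"

definition is_expr :: "nat \<Rightarrow> nat list \<Rightarrow> (nat \<Rightarrow> nat) \<Rightarrow> bool" where
  "is_expr l rs w \<longleftrightarrow> (\<forall>r \<in> set rs. 1 \<le> r \<and> r < l) \<and> foldr (\<circ>) (map stp rs) id = w"

definition reduced_expr :: "nat \<Rightarrow> nat list \<Rightarrow> (nat \<Rightarrow> nat) \<Rightarrow> bool" where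
  "reduced_expr l rs w \<longleftrightarrow> is_expr l rs w \<and> (\<forall>rs'. is_expr l rs' w \<longrightarrow> length rs \<le> length rs')"

definition psis :: "nat list \<Rightarrow> ('k::comm_ring_1) kexp" where
  "psis rs = kprod (map Psi rs)"

end

theory Submission
  imports Defs
begin

text \<open>
  Every word of weight \<theta> has distinct letters, so the braid relations of R_\<theta> hold without
  correction terms on these words and psi_w e_\<sigma> does not depend on the reduced expression chosen
  for w (Matsumoto). Lengths are counted by inversion sets: letters x < y occur in different orders
  in j_\<tau> and j_\<pi> iff exactly one of C_\<tau>, C_\<pi> meets [x, y). As C_\<pi> \<subseteq> C_\<tau> \<subseteq> C_\<sigma> for
  \<tau> = refn^i(\<pi>), lengths add, so psi_w(\<pi>,\<sigma>) e_\<sigma> = psi_z psi_w(\<tau>,\<sigma>) e_\<sigma> for a reduced expression z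
  of w(\<pi>,\<tau>), while psi_w(\<tau>,\<pi>) may be computed from the reversal of z. Collapsing
  psi_rev(z) psi_z e_\<tau> one quadratic relation at a time, each psi_r^2 contributes 1 unless the two
  letters it exchanges are consecutive integers; the only such pair inverted between j_\<tau> and j_\<pi>
  is (i, i+1), which leaves (y_idx_\<tau>(i) - y_idx_\<tau>(i+1)) e_\<tau>. Moving this factor through
  psi_w(\<tau>,\<sigma>) turns positions in j_\<tau> into positions in j_\<sigma>.
\<close>

section \<open>Equational reasoning in \<open>R\<^sub>\<theta>\<close>\<close>

declare keq.trans[trans]

lemma psis_Cons: "psis (r # rs) = Times (Psi r) (psis rs)" by (simp add: psis_def kprod_def)
lemma psis_Nil: "psis [] = One" by (simp add: psis_def kprod_def)

locale klr =
  fixes \<theta> :: "int multiset"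
begin

abbreviation keq_in :: "'k::comm_ring_1 kexp \<Rightarrow> 'k kexp \<Rightarrow> bool" (infix "\<approx>" 50) where
  "x \<approx> y \<equiv> keq \<theta> x y"

lemma keq_times_left: "x \<approx> x' \<Longrightarrow> Times x y \<approx> Times x' y" by (simp add: keq.cong_times keq.refl)
lemma keq_times_right: "y \<approx> y' \<Longrightarrow> Times x y \<approx> Times x y'" by (simp add: keq.cong_times keq.refl)
lemma keq_times_assoc': "Times x (Times y z) \<approx> Times (Times x y) z" by (rule keq.sym, rule keq.times_assoc)

lemma keq_plus_left: "x \<approx> x' \<Longrightarrow> Plus x y \<approx> Plus x' y" by (simp add: keq.cong_plus keq.refl)
lemma keq_plus_right: "y \<approx> y' \<Longrightarrow> Plus x y \<approx> Plus x y'" by (simp add: keq.cong_plus keq.refl)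

lemma keq_zero_plus: "Plus Zero x \<approx> x"
  using keq.plus_comm keq.plus_zero keq.trans by blast

lemma keq_plus_cancel_left: assumes "Plus x y \<approx> Plus x z" shows "y \<approx> z"
proof -
  have "y \<approx> Plus Zero y" by (rule keq.sym, rule keq_zero_plus)
  also have "\<dots> \<approx> Plus (Plus x (Neg x)) y" by (rule keq_plus_left, rule keq.sym, rule keq.plus_neg)
  also have "\<dots> \<approx> Plus (Plus (Neg x) x) y" by (rule keq_plus_left, rule keq.plus_comm)
  also have "\<dots> \<approx> Plus (Neg x) (Plus x y)" by (rule keq.plus_assoc)
  also have "\<dots> \<approx> Plus (Neg x) (Plus x z)" by (rule keq_plus_right, rule assms)
  also have "\<dots> \<approx> Plus (Plus (Neg x) x) z" by (rule keq.sym, rule keq.plus_assoc)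
  also have "\<dots> \<approx> Plus (Plus x (Neg x)) z" by (rule keq_plus_left, rule keq.plus_comm)
  also have "\<dots> \<approx> Plus Zero z" by (rule keq_plus_left, rule keq.plus_neg)
  also have "\<dots> \<approx> z" by (rule keq_zero_plus)
  finally show ?thesis .
qed

lemma keq_times_zero: "Times x Zero \<approx> Zero"
proof -
  have "Plus (Times x Zero) (Times x Zero) \<approx> Times x (Plus Zero Zero)" by (rule keq.sym, rule keq.distrib_l)
  also have "\<dots> \<approx> Times x Zero" by (rule keq_times_right, rule keq.plus_zero)
  also have "\<dots> \<approx> Plus (Times x Zero) Zero" by (rule keq.sym, rule keq.plus_zero)
  finally show ?thesis by (rule keq_plus_cancel_left)
qed

lemma keq_zero_times: "Times Zero x \<approx> Zero"
proof -
  have "Plus (Times Zero x) (Times Zero x) \<approx> Times (Plus Zero Zero) x" by (rule keq.sym, rule keq.distrib_r)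
  also have "\<dots> \<approx> Times Zero x" by (rule keq_times_left, rule keq.plus_zero)
  also have "\<dots> \<approx> Plus (Times Zero x) Zero" by (rule keq.sym, rule keq.plus_zero)
  finally show ?thesis by (rule keq_plus_cancel_left)
qed

lemma keq_Sc_zero: "(Sc 0 :: 'k::comm_ring_1 kexp) \<approx> Zero"
proof -
  have "Plus (Sc 0) (Sc 0) \<approx> (Sc (0+0) :: 'k kexp)" by (rule keq.sym, rule keq.sc_plus)
  also have "\<dots> = Sc 0" by simp
  also have "\<dots> \<approx> Plus (Sc 0) Zero" by (rule keq.sym, rule keq.plus_zero)
  finally show ?thesis by (rule keq_plus_cancel_left)
qed

lemma keq_neg_unique: assumes "Plus x y \<approx> Zero" shows "y \<approx> Neg x"
proof -
  have "Plus x y \<approx> Plus x (Neg x)" using assms keq.plus_neg keq.sym keq.trans by blast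
  thus ?thesis by (rule keq_plus_cancel_left)
qed

lemma keq_Sc_minus_one: "(Sc (-1) :: 'k::comm_ring_1 kexp) \<approx> Neg One"
proof -
  have "Plus One (Sc (-1)) \<approx> Plus (Sc 1) (Sc (-1::'k))" by (rule keq_plus_left, rule keq.sym, rule keq.sc_one)
  also have "\<dots> \<approx> Sc (1 + -1)" by (rule keq.sym, rule keq.sc_plus)
  also have "\<dots> = Sc 0" by simp
  also have "\<dots> \<approx> Zero" by (rule keq_Sc_zero)
  finally show ?thesis by (rule keq_neg_unique)
qed

lemma keq_neg_times: "Times (Neg x) y \<approx> Neg (Times x y)"
proof -
  have "Plus (Times x y) (Times (Neg x) y) \<approx> Times (Plus x (Neg x)) y" by (rule keq.sym, rule keq.distrib_r)
  also have "\<dots> \<approx> Times Zero y" by (rule keq_times_left, rule keq.plus_neg)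
  also have "\<dots> \<approx> Zero" by (rule keq_zero_times)
  finally show ?thesis by (rule keq_neg_unique)
qed

lemma keq_times_neg: "Times x (Neg y) \<approx> Neg (Times x y)"
proof -
  have "Plus (Times x y) (Times x (Neg y)) \<approx> Times x (Plus y (Neg y))" by (rule keq.sym, rule keq.distrib_l)
  also have "\<dots> \<approx> Times x Zero" by (rule keq_times_right, rule keq.plus_neg)
  also have "\<dots> \<approx> Zero" by (rule keq_times_zero)
  finally show ?thesis by (rule keq_neg_unique)
qed

lemma keq_neg_neg: "Neg (Neg x) \<approx> x"
proof -
  have "Plus (Neg x) x \<approx> Zero" using keq.plus_comm keq.plus_neg keq.trans by blast
  thus ?thesis using keq_neg_unique keq.sym by blast
qed

lemma keq_neg_plus: "Neg (Plus x y) \<approx> Plus (Neg x) (Neg y)"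
proof -
  have "Plus (Plus x y) (Plus (Neg x) (Neg y)) \<approx> Plus x (Plus y (Plus (Neg x) (Neg y)))" by (rule keq.plus_assoc)
  also have "\<dots> \<approx> Plus x (Plus y (Plus (Neg y) (Neg x)))" by (rule keq_plus_right, rule keq_plus_right, rule keq.plus_comm)
  also have "\<dots> \<approx> Plus x (Plus (Plus y (Neg y)) (Neg x))" by (rule keq_plus_right, rule keq.sym, rule keq.plus_assoc)
  also have "\<dots> \<approx> Plus x (Plus Zero (Neg x))" by (rule keq_plus_right, rule keq_plus_left, rule keq.plus_neg)
  also have "\<dots> \<approx> Plus x (Neg x)" by (rule keq_plus_right, rule keq_zero_plus)
  also have "\<dots> \<approx> Zero" by (rule keq.plus_neg)
  finally show ?thesis using keq_neg_unique keq.sym by blast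
qed

lemma keq_Sc_minus_one_diff: "Times (Sc (-1)) (Minus x y) \<approx> Minus y x"
proof -
  have "Times (Sc (-1)) (Minus x y) \<approx> Times (Neg One) (Minus x y)" by (rule keq_times_left, rule keq_Sc_minus_one)
  also have "\<dots> \<approx> Neg (Times One (Minus x y))" by (rule keq_neg_times)
  also have "\<dots> \<approx> Neg (Minus x y)" by (rule keq.cong_neg, rule keq.times_one_l)
  also have "\<dots> \<approx> Plus (Neg x) (Neg (Neg y))" by (rule keq_neg_plus)
  also have "\<dots> \<approx> Plus (Neg x) y" by (rule keq_plus_right, rule keq_neg_neg)
  also have "\<dots> \<approx> Minus y x" by (rule keq.plus_comm)
  finally show ?thesis .
qed

lemma psis_append: "psis (xs @ ys) \<approx> Times (psis xs) (psis ys :: 'k::comm_ring_1 kexp)"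
proof (induction xs)
  case Nil
  then show ?case by (simp add: psis_Nil, rule keq.sym, rule keq.times_one_l)
next
  case (Cons x xs)
  have "psis ((x # xs) @ ys) = Times (Psi x) (psis (xs @ ys) :: 'k kexp)" by (simp add: psis_Cons)
  also have "\<dots> \<approx> Times (Psi x) (Times (psis xs) (psis ys))" using Cons.IH by (rule keq_times_right)
  also have "\<dots> \<approx> Times (psis (x#xs)) (psis ys)" by (simp add: psis_Cons, rule keq_times_assoc')
  finally show ?case .
qed

end

text \<open>The 1-based position of a letter, as in \<open>idx\<close>; a junk value unless the word is distinct and
  contains the letter.\<close>
definition pos :: "int list \<Rightarrow> int \<Rightarrow> nat" where
  "pos W x = (THE k. 1 \<le> k \<and> k \<le> length W \<and> W ! (k - 1) = x)"

lemma pos_nth: assumes "distinct W" "k < length W" shows "pos W (W ! k) = Suc k"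
  unfolding pos_def
proof (rule the_equality)
  show "1 \<le> Suc k \<and> Suc k \<le> length W \<and> W ! (Suc k - 1) = W ! k" using assms by auto
next
  fix k' assume "1 \<le> k' \<and> k' \<le> length W \<and> W ! (k' - 1) = W ! k"
  then show "k' = Suc k" using assms nth_eq_iff_index_eq[of W "k'-1" k] by auto
qed

lemma pos_of_mem: assumes "distinct W" "x \<in> set W"
  shows "1 \<le> pos W x" "pos W x \<le> length W" "W ! (pos W x - 1) = x"
proof -
  obtain k where k: "k < length W" "W ! k = x" using assms(2) by (auto simp: in_set_conv_nth)
  have "pos W x = Suc k" using pos_nth[OF assms(1) k(1)] k(2) by simp
  then show "1 \<le> pos W x" "pos W x \<le> length W" "W ! (pos W x - 1) = x" using k by auto
qed

lemma pos_inj: assumes "distinct W" "x \<in> set W" "y \<in> set W" "pos W x = pos W y" shows "x = y"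
  using pos_of_mem[OF assms(1,2)] pos_of_mem[OF assms(1,3)] assms(4) by metis

lemma pos_append1: assumes "distinct (L1 @ L2)" "x \<in> set L1" shows "pos (L1 @ L2) x = pos L1 x"
proof -
  have d: "distinct L1" using assms(1) by simp
  note P = pos_of_mem[OF d assms(2)]
  have lt: "pos L1 x - 1 < length L1" using P(1,2) by linarith
  have "(L1 @ L2) ! (pos L1 x - 1) = x" using P(3) lt by (simp add: nth_append)
  then have "pos (L1 @ L2) ((L1 @ L2) ! (pos L1 x - 1)) = Suc (pos L1 x - 1)"
    using pos_nth[OF assms(1), of "pos L1 x - 1"] P by simp
  then show ?thesis using P \<open>(L1 @ L2) ! (pos L1 x - 1) = x\<close> by simp
qed

lemma pos_append2: assumes "distinct (L1 @ L2)" "x \<in> set L2" shows "pos (L1 @ L2) x = length L1 + pos L2 x"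
proof -
  have d: "distinct L2" using assms(1) by simp
  note P = pos_of_mem[OF d assms(2)]
  have e: "(L1 @ L2) ! (length L1 + (pos L2 x - 1)) = x" using P(3) by (simp only: nth_append_length_plus)
  have "pos (L1 @ L2) ((L1 @ L2) ! (length L1 + (pos L2 x - 1))) = Suc (length L1 + (pos L2 x - 1))"
    using pos_nth[OF assms(1), of "length L1 + (pos L2 x - 1)"] P by simp
  then show ?thesis using P e by simp
qed

lemma pos_upto: assumes "s \<le> x" "x \<le> e" shows "pos [s..e] x = nat (x - s) + 1"
proof -
  have "[s..e] ! nat (x - s) = x" using assms by (simp add: nth_upto)
  moreover have "nat (x - s) < length [s..e]" using assms by simp
  ultimately show ?thesis using pos_nth[of "[s..e]" "nat (x - s)"] by simp
qed

lemma swapw_length[simp]: "length (swapw r W) = length W" by (simp add: swapw_def)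

lemma swapw_nth: assumes "1 \<le> r" "r < length W" "k < length W"
  shows "swapw r W ! k = W ! (if k = r - 1 then r else if k = r then r - 1 else k)"
  using assms by (auto simp: swapw_def nth_list_update)

lemma swapw_mset: assumes "1 \<le> r" "r < length W" shows "mset (swapw r W) = mset W"
proof -
  have "swapw r W = W[r - 1 := W ! r, r := W ! (r - 1)]" by (simp add: swapw_def)
  then show ?thesis using assms mset_swap[of r W "r - 1"] by simp
qed

lemma swapw_set: assumes "1 \<le> r" "r < length W" shows "set (swapw r W) = set W"
proof -
  have "set_mset (mset (swapw r W)) = set_mset (mset W)" using swapw_mset[OF assms] by simp
  then show ?thesis by simp
qed

lemma swapw_distinct: assumes "1 \<le> r" "r < length W" shows "distinct (swapw r W) = distinct W"
  using swapw_mset[OF assms] by (rule mset_eq_imp_distinct_iff)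

lemma swapw_swapw: assumes "1 \<le> r" "r < length W" shows "swapw r (swapw r W) = W"
  by (rule nth_equalityI) (use assms in \<open>auto simp: swapw_nth\<close>)

lemma stp_simps: "stp r r = r + 1" "stp r (r+1) = r" "p \<noteq> r \<Longrightarrow> p \<noteq> r + 1 \<Longrightarrow> stp r p = p"
  by (auto simp: stp_def)

lemma stp_stp[simp]: "stp r (stp r p) = p" by (auto simp: stp_def)

lemma pos_swapw: assumes "distinct W" "1 \<le> r" "r < length W" "x \<in> set W"
  shows "pos (swapw r W) x = stp r (pos W x)"
proof -
  let ?p = "pos W x"
  note P = pos_of_mem[OF assms(1,4)]
  have d: "distinct (swapw r W)" using swapw_distinct assms by simp
  have k: "stp r ?p - 1 < length W" "1 \<le> stp r ?p"
    using P assms(2,3) by (auto simp: stp_def)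
  have "swapw r W ! (stp r ?p - 1) = x"
    using P assms(2,3) k by (auto simp: swapw_nth stp_def)
  then have "pos (swapw r W) x = Suc (stp r ?p - 1)"
    using pos_nth[OF d, of "stp r ?p - 1"] k by simp
  then show ?thesis using k by simp
qed

lemma stp_order_flip: assumes "p \<noteq> q"
  shows "((stp r p < stp r q) \<noteq> (p < q)) \<longleftrightarrow> (p = r \<and> q = r + 1) \<or> (q = r \<and> p = r + 1)"
  using assms by (auto simp: stp_def)

section \<open>Inversion sets\<close>

definition inv_set :: "int list \<Rightarrow> int list \<Rightarrow> (int \<times> int) set" where
  "inv_set A B = {(x, y). x \<in> set A \<and> y \<in> set A \<and> x < y \<and> (pos A x < pos A y) \<noteq> (pos B x < pos B y)}"

definition n_inv :: "int list \<Rightarrow> int list \<Rightarrow> nat" where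
  "n_inv A B = card (inv_set A B)"

lemma inv_set_finite: "finite (inv_set A B)"
  by (rule finite_subset[of _ "set A \<times> set A"]) (auto simp: inv_set_def)

lemma inv_set_sym: "set A = set B \<Longrightarrow> inv_set A B = inv_set B A"
  by (auto simp: inv_set_def)

lemma inv_set_self: "inv_set A A = {}" by (auto simp: inv_set_def)

lemma inv_set_sym_diff: assumes "set A = set B" "set B = set C"
  shows "inv_set A C = (inv_set A B - inv_set B C) \<union> (inv_set B C - inv_set A B)"
  using assms by (auto simp: inv_set_def)

definition sorted_pair :: "int \<Rightarrow> int \<Rightarrow> int \<times> int" where
  "sorted_pair u v = (min u v, max u v)"

lemma inv_set_swap: assumes "distinct B" "1 \<le> r" "r < length B"
  shows "inv_set B (swapw r B) = {sorted_pair (B ! (r - 1)) (B ! r)}"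
proof -
  have ne: "B ! (r - 1) \<noteq> B ! r" using assms nth_eq_iff_index_eq[of B "r-1" r] by auto
  have pr: "pos B (B ! (r - 1)) = r" "pos B (B ! r) = r + 1"
    using pos_nth[OF assms(1), of "r-1"] pos_nth[OF assms(1), of r] assms by auto
  show ?thesis
  proof (rule set_eqI, clarify)
    fix x y
    show "((x, y) \<in> inv_set B (swapw r B)) = ((x, y) \<in> {sorted_pair (B ! (r - 1)) (B ! r)})"
    proof
      assume "(x, y) \<in> inv_set B (swapw r B)"
      then have xy: "x \<in> set B" "y \<in> set B" "x < y"
        "(pos B x < pos B y) \<noteq> (stp r (pos B x) < stp r (pos B y))"
        using pos_swapw[OF assms(1-3)] by (auto simp: inv_set_def)
      have "pos B x \<noteq> pos B y" using xy pos_inj[OF assms(1)] by fastforce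
      then have "(pos B x = r \<and> pos B y = r + 1) \<or> (pos B y = r \<and> pos B x = r + 1)"
        using stp_order_flip[of "pos B x" "pos B y" r] xy(4) by blast
      then have "(x = B ! (r-1) \<and> y = B ! r) \<or> (y = B ! (r-1) \<and> x = B ! r)"
        using pr pos_inj[OF assms(1)] xy assms nth_mem[of "r-1" B] nth_mem[of r B] by (metis less_imp_diff_less)
      then show "(x, y) \<in> {sorted_pair (B ! (r - 1)) (B ! r)}" using xy(3) by (auto simp: sorted_pair_def)
    next
      assume "(x, y) \<in> {sorted_pair (B ! (r - 1)) (B ! r)}"
      then have xy: "(x = B ! (r-1) \<and> y = B ! r) \<or> (y = B ! (r-1) \<and> x = B ! r)" "x < y"
        using ne by (auto simp: sorted_pair_def min_def max_def split: if_splits)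
      have m: "B ! (r-1) \<in> set B" "B ! r \<in> set B" using assms by auto
      have inB: "x \<in> set B" "y \<in> set B" using xy(1) m by auto
      show "(x, y) \<in> inv_set B (swapw r B)"
        using xy inB pr pos_swapw[OF assms(1-3)] swapw_set[OF assms(2,3)]
        by (auto simp: inv_set_def stp_def)
    qed
  qed
qed

lemma card_sym_diff_single: assumes "finite X"
  shows "card ((X - {p}) \<union> ({p} - X)) = (if p \<in> X then card X - 1 else card X + 1)"
proof (cases "p \<in> X")
  case True
  then have "(X - {p}) \<union> ({p} - X) = X - {p}" by auto
  then show ?thesis using True assms by simp
next
  case False
  then have "(X - {p}) \<union> ({p} - X) = insert p X" by auto
  then show ?thesis using False assms by simp
qed

lemma n_inv_swap: assumes "distinct B" "1 \<le> r" "r < length B" "set A = set B"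
  shows "n_inv A (swapw r B) = (if sorted_pair (B ! (r - 1)) (B ! r) \<in> inv_set A B then n_inv A B - 1 else n_inv A B + 1)"
proof -
  have "inv_set A (swapw r B) = (inv_set A B - {sorted_pair (B ! (r - 1)) (B ! r)}) \<union> ({sorted_pair (B ! (r - 1)) (B ! r)} - inv_set A B)"
  proof -
    have "set B = set (swapw r B)" using swapw_set[OF assms(2,3)] by simp
    from inv_set_sym_diff[OF assms(4) this] show ?thesis unfolding inv_set_swap[OF assms(1-3)] .
  qed
  then show ?thesis unfolding n_inv_def using card_sym_diff_single[OF inv_set_finite, of A B] by metis
qed

lemma set_pos_less: assumes "distinct W" "x \<in> set W"
  shows "{y \<in> set W. pos W y < pos W x} = set (take (pos W x - 1) W)"
proof -
  note P = pos_of_mem[OF assms]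
  show ?thesis
  proof (rule set_eqI)
    fix y
    show "(y \<in> {y \<in> set W. pos W y < pos W x}) = (y \<in> set (take (pos W x - 1) W))"
    proof
      assume "y \<in> {y \<in> set W. pos W y < pos W x}"
      then have y: "y \<in> set W" "pos W y < pos W x" by auto
      note Q = pos_of_mem[OF assms(1) y(1)]
      show "y \<in> set (take (pos W x - 1) W)"
        unfolding in_set_conv_nth using Q y P by (intro exI[of _ "pos W y - 1"]) auto
    next
      assume "y \<in> set (take (pos W x - 1) W)"
      then obtain k where k: "k < length (take (pos W x - 1) W)" "take (pos W x - 1) W ! k = y"
        by (auto simp: in_set_conv_nth)
      then have "k < length W" "W ! k = y" "k < pos W x - 1" by auto
      then show "y \<in> {y \<in> set W. pos W y < pos W x}"
        using pos_nth[OF assms(1)] by force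
    qed
  qed
qed

lemma card_pos_less: assumes "distinct W" "x \<in> set W"
  shows "card {y \<in> set W. pos W y < pos W x} = pos W x - 1"
proof -
  have "card {y \<in> set W. pos W y < pos W x} = card (set (take (pos W x - 1) W))"
    by (simp only: set_pos_less[OF assms])
  also have "\<dots> = length (take (pos W x - 1) W)" by (rule distinct_card, simp add: distinct_take assms(1))
  also have "\<dots> = pos W x - 1" using pos_of_mem[OF assms] by simp
  finally show ?thesis .
qed

lemma inv_set_empty_imp_eq: assumes "distinct A" "distinct B" "set A = set B" "inv_set A B = {}"
  shows "A = B"
proof -
  have ord: "pos A y < pos A x \<longleftrightarrow> pos B y < pos B x" if "x \<in> set A" "y \<in> set A" for x y
  proof (cases "x = y")
    case False
    have yB: "x \<in> set B" "y \<in> set B" using that assms(3) by auto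
    have nA: "pos A x \<noteq> pos A y" using pos_inj[OF assms(1) that] False by auto
    have nB: "pos B x \<noteq> pos B y" using pos_inj[OF assms(2) yB] False by auto
    have "(x, y) \<notin> inv_set A B" "(y, x) \<notin> inv_set A B" using assms(4) by auto
    then have "x < y \<longrightarrow> (pos A x < pos A y) = (pos B x < pos B y)"
      "y < x \<longrightarrow> (pos A y < pos A x) = (pos B y < pos B x)"
      using that unfolding inv_set_def by auto
    moreover have "x < y \<or> y < x" using False by auto
    ultimately show ?thesis using nA nB by auto
  qed simp
  have pe: "pos A x = pos B x" if "x \<in> set A" for x
  proof -
    have "{y \<in> set A. pos A y < pos A x} = {y \<in> set B. pos B y < pos B x}"
      using ord[OF that] assms(3) by auto
    then have "pos A x - 1 = pos B x - 1"
      using card_pos_less[OF assms(1) that] card_pos_less[OF assms(2), of x] that assms(3) by simp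
    moreover have "1 \<le> pos A x" "1 \<le> pos B x" using pos_of_mem[OF assms(1) that] pos_of_mem[OF assms(2), of x] that assms(3) by auto
    ultimately show ?thesis by simp
  qed
  have len: "length A = length B" using distinct_card[OF assms(1)] distinct_card[OF assms(2)] assms(3) by simp
  show ?thesis
  proof (rule nth_equalityI)
    show "length A = length B" by (rule len)
    fix k assume k: "k < length A"
    have "A ! k \<in> set A" using k by simp
    then have "pos B (A ! k) = Suc k" using pe pos_nth[OF assms(1) k] by simp
    then show "A ! k = B ! k" using pos_of_mem[OF assms(2), of "A ! k"] \<open>A ! k \<in> set A\<close> assms(3) by simp
  qed
qed

lemma inv_set_adjacent_pair: assumes "distinct A" "distinct B" "set A = set B" "inv_set A B \<noteq> {}"
  shows "\<exists>r. 1 \<le> r \<and> r < length B \<and> sorted_pair (B ! (r - 1)) (B ! r) \<in> inv_set A B"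
proof (rule ccontr)
  assume H: "\<not> ?thesis"
  let ?f = "\<lambda>k. pos A (B ! k)"
  have inc: "?f k < ?f (Suc k)" if "Suc k < length B" for k
  proof -
    have ne: "B ! k \<noteq> B ! Suc k" using assms(2) that nth_eq_iff_index_eq[of B k "Suc k"] by auto
    have inA: "B ! k \<in> set A" "B ! Suc k \<in> set A" using that assms(3) by auto
    have pB: "pos B (B ! k) < pos B (B ! Suc k)" using pos_nth[OF assms(2)] that by simp
    have "sorted_pair (B ! k) (B ! Suc k) \<notin> inv_set A B" using H that by (metis Suc_eq_plus1 diff_Suc_1 le_add2)
    moreover have nA: "pos A (B ! k) \<noteq> pos A (B ! Suc k)" using pos_inj[OF assms(1) inA] ne by auto
    moreover have nB: "pos B (B ! k) \<noteq> pos B (B ! Suc k)" using pB by simp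
    ultimately have "(pos A (B ! k) < pos A (B ! Suc k)) = (pos B (B ! k) < pos B (B ! Suc k))"
      using ne inA unfolding inv_set_def sorted_pair_def by (cases "B ! k < B ! Suc k") (auto simp: min_def max_def)
    then show ?thesis using pB by simp
  qed
  have mono: "?f k < ?f k'" if "k < k'" "k' < length B" for k k'
  proof -
    have i: "\<And>n. n \<in> {0..<length B - 1} \<Longrightarrow> ?f n < ?f (Suc n)" using inc by auto
    have sub: "{k..<k'} \<subseteq> {0..<length B - 1}" using that by auto
    show ?thesis by (rule lift_Suc_mono_less_ivl[of "{0..<length B - 1}" ?f, OF i that(1) sub])
  qed
  have "inv_set A B = {}"
  proof (rule ccontr)
    assume "inv_set A B \<noteq> {}"
    then obtain x y where xy: "x \<in> set A" "y \<in> set A" "x < y" "(pos A x < pos A y) \<noteq> (pos B x < pos B y)"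
      unfolding inv_set_def by auto
    have xB: "x \<in> set B" "y \<in> set B" using xy assms(3) by auto
    note PX = pos_of_mem[OF assms(2) xB(1)] and PY = pos_of_mem[OF assms(2) xB(2)]
    have "pos B x \<noteq> pos B y" using xy(3) pos_inj[OF assms(2) xB] by auto
    then consider "pos B x < pos B y" | "pos B y < pos B x" by linarith
    then show False
    proof cases
      case 1
      have "pos B x - 1 < pos B y - 1" "pos B y - 1 < length B" using 1 PX PY by auto
      then have "?f (pos B x - 1) < ?f (pos B y - 1)" by (rule mono)
      then have "pos A x < pos A y" by (simp only: PX(3) PY(3))
      then show ?thesis using xy(4) 1 by simp
    next
      case 2
      have "pos B y - 1 < pos B x - 1" "pos B x - 1 < length B" using 2 PX PY by auto
      then have "?f (pos B y - 1) < ?f (pos B x - 1)" by (rule mono)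
      then have "pos A y < pos A x" by (simp only: PX(3) PY(3))
      then show ?thesis using xy(4) 2 by simp
    qed
  qed
  then show False using assms(4) by simp
qed

definition swaps :: "nat list \<Rightarrow> int list \<Rightarrow> int list" where
  "swaps z A = foldr swapw z A"

lemma swaps_Nil[simp]: "swaps [] A = A" and swaps_Cons[simp]: "swaps (r # z) A = swapw r (swaps z A)"
  by (simp_all add: swaps_def)

lemma swaps_append: "swaps (xs @ ys) A = swaps xs (swaps ys A)" by (simp add: swaps_def)

definition valid_swaps :: "nat \<Rightarrow> nat list \<Rightarrow> bool" where
  "valid_swaps l z \<longleftrightarrow> (\<forall>r \<in> set z. 1 \<le> r \<and> r < l)"

lemma valid_swaps_Cons[simp]: "valid_swaps l (r # z) \<longleftrightarrow> 1 \<le> r \<and> r < l \<and> valid_swaps l z" by (auto simp: valid_swaps_def)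
lemma valid_swaps_Nil[simp]: "valid_swaps l []" by (simp add: valid_swaps_def)
lemma valid_swaps_append[simp]: "valid_swaps l (xs @ ys) \<longleftrightarrow> valid_swaps l xs \<and> valid_swaps l ys" by (auto simp: valid_swaps_def)
lemma valid_swaps_rev[simp]: "valid_swaps l (rev xs) \<longleftrightarrow> valid_swaps l xs" by (auto simp: valid_swaps_def)

lemma swaps_length_mset: assumes "valid_swaps (length A) z"
  shows "length (swaps z A) = length A" "mset (swaps z A) = mset A"
proof -
  have "length (swaps z A) = length A \<and> mset (swaps z A) = mset A" using assms
  proof (induction z)
    case (Cons r z)
    then have "length (swaps z A) = length A" "mset (swaps z A) = mset A" by auto
    moreover have "1 \<le> r" "r < length (swaps z A)" using Cons.prems calculation by auto
    ultimately show ?case using swapw_mset[of r "swaps z A"] by simp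
  qed simp
  then show "length (swaps z A) = length A" "mset (swaps z A) = mset A" by auto
qed

lemma swaps_set: assumes "valid_swaps (length A) z" shows "set (swaps z A) = set A"
proof -
  have "set_mset (mset (swaps z A)) = set_mset (mset A)" using swaps_length_mset(2)[OF assms] by simp
  then show ?thesis by simp
qed
lemma swaps_distinct: assumes "valid_swaps (length A) z" shows "distinct (swaps z A) = distinct A"
  using swaps_length_mset(2)[OF assms] by (rule mset_eq_imp_distinct_iff)

lemma n_inv_swaps_le: assumes "distinct A" "valid_swaps (length A) z" shows "n_inv A (swaps z A) \<le> length z"
  using assms(2)
proof (induction z)
  case Nil
  then show ?case by (simp add: n_inv_def inv_set_self)
next
  case (Cons r z)
  have ok: "valid_swaps (length A) z" "1 \<le> r" "r < length A" using Cons.prems by auto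
  have W: "distinct (swaps z A)" "r < length (swaps z A)" "set A = set (swaps z A)"
    using swaps_length_mset(1)[OF ok(1)] swaps_set[OF ok(1)] swaps_distinct[OF ok(1)] assms(1) ok by auto
  have "n_inv A (swaps (r # z) A) \<le> n_inv A (swaps z A) + 1"
    unfolding swaps_Cons n_inv_swap[OF W(1) ok(2) W(2) W(3)] by auto
  then show ?case using Cons by simp
qed

lemma exists_swaps_eq: assumes "distinct A" "distinct B" "set A = set B"
  shows "\<exists>z. valid_swaps (length A) z \<and> swaps z A = B \<and> length z = n_inv A B"
  using assms(2,3)
proof (induction "n_inv A B" arbitrary: B)
  case 0
  then have "inv_set A B = {}" using inv_set_finite by (simp add: n_inv_def)
  then have "A = B" using inv_set_empty_imp_eq assms(1) 0 by blast
  then show ?case by (intro exI[of _ "[]"]) (simp add: n_inv_def inv_set_self)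
next
  case (Suc n)
  then have "inv_set A B \<noteq> {}" by (auto simp: n_inv_def)
  then obtain r where r: "1 \<le> r" "r < length B" "sorted_pair (B ! (r - 1)) (B ! r) \<in> inv_set A B"
    using inv_set_adjacent_pair assms(1) Suc.prems by blast
  let ?B' = "swapw r B"
  have d': "distinct ?B'" "set A = set ?B'" using swapw_distinct swapw_set r Suc.prems by auto
  have "n_inv A ?B' = n" unfolding n_inv_swap[OF Suc.prems(1) r(1,2) Suc.prems(2)] using r(3) Suc.hyps(2) by simp
  then obtain z where z: "valid_swaps (length A) z" "swaps z A = ?B'" "length z = n" using Suc.hyps(1)[OF _ d'] by blast
  have lAB: "length A = length B" using assms(1) Suc.prems(1,2) distinct_card by metis
  have "swaps (r # z) A = B" using z(2) swapw_swapw[OF r(1,2)] by simp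
  moreover have "valid_swaps (length A) (r # z)" using z(1) r lAB by simp
  moreover have "length (r # z) = n_inv A B" using z(3) Suc.hyps(2) by simp
  ultimately show ?case by blast
qed

fun swap_pairs :: "nat list \<Rightarrow> int list \<Rightarrow> (int \<times> int) list" where
  "swap_pairs [] A = []"
| "swap_pairs (r # z) A = sorted_pair (swaps z A ! (r - 1)) (swaps z A ! r) # swap_pairs z A"

lemmas swap_pairs_Cons = swap_pairs.simps(2)

lemma inv_set_swaps_subset: assumes "distinct A" "valid_swaps (length A) z"
  shows "inv_set A (swaps z A) \<subseteq> set (swap_pairs z A)"
  using assms(2)
proof (induction z)
  case Nil
  then show ?case by (simp add: inv_set_self)
next
  case (Cons r z)
  have W: "distinct (swaps z A)" "length (swaps z A) = length A" "set A = set (swaps z A)"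
    using Cons.prems swaps_length_mset swaps_set swaps_distinct assms(1) by auto
  have "inv_set A (swaps (r # z) A) = (inv_set A (swaps z A) - inv_set (swaps z A) (swapw r (swaps z A))) \<union>
      (inv_set (swaps z A) (swapw r (swaps z A)) - inv_set A (swaps z A))"
    using inv_set_sym_diff[of A "swaps z A" "swapw r (swaps z A)"] W swapw_set Cons.prems by simp
  also have "inv_set (swaps z A) (swapw r (swaps z A)) = {sorted_pair (swaps z A ! (r - 1)) (swaps z A ! r)}"
    using inv_set_swap W Cons.prems by simp
  finally have "inv_set A (swaps (r # z) A) \<subseteq> inv_set A (swaps z A) \<union> {sorted_pair (swaps z A ! (r - 1)) (swaps z A ! r)}" by blast
  then show ?case using Cons unfolding swap_pairs_Cons by auto
qed

lemma length_swap_pairs[simp]: "length (swap_pairs z A) = length z" by (induction z) auto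

lemma swap_pairs_reduced: assumes "distinct A" "valid_swaps (length A) z" "length z = n_inv A (swaps z A)"
  shows "set (swap_pairs z A) = inv_set A (swaps z A)" "distinct (swap_pairs z A)"
proof -
  have s: "inv_set A (swaps z A) \<subseteq> set (swap_pairs z A)" by (rule inv_set_swaps_subset[OF assms(1,2)])
  have c1: "card (set (swap_pairs z A)) \<le> length z" using card_length[of "swap_pairs z A"] by simp
  have c2: "card (inv_set A (swaps z A)) = length z" using assms(3) by (simp add: n_inv_def)
  show "set (swap_pairs z A) = inv_set A (swaps z A)"
    using card_seteq[OF _ s] c1 c2 by (metis List.finite_set)
  then show "distinct (swap_pairs z A)" using c2 card_distinct by (metis length_swap_pairs)
qed

definition reduced_on :: "nat \<Rightarrow> int list \<Rightarrow> nat list \<Rightarrow> bool" where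
  "reduced_on l A u \<longleftrightarrow> valid_swaps l u \<and> length u = n_inv A (swaps u A)"

lemma exists_reduced_on: assumes "distinct A" "distinct B" "set A = set B" "length A = l"
  shows "\<exists>u. reduced_on l A u \<and> swaps u A = B"
  using exists_swaps_eq[OF assms(1-3)] assms(4) by (auto simp: reduced_on_def)

lemma swaps_rev: "valid_swaps (length W) z \<Longrightarrow> swaps (rev z) (swaps z W) = W"
proof (induction z)
  case (Cons r z)
  have ok: "1 \<le> r" "r < length W" "valid_swaps (length W) z" using Cons.prems by auto
  have "swaps (rev (r # z)) (swaps (r # z) W) = swaps (rev z) (swapw r (swapw r (swaps z W)))"
    by (simp add: swaps_append)
  also have "swapw r (swapw r (swaps z W)) = swaps z W" using swapw_swapw[of r "swaps z W"] ok swaps_length_mset(1)[OF ok(3)] by simp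
  finally show ?case using Cons.IH[OF ok(3)] by simp
qed simp

lemma reduced_on_rev: assumes "length A = l" "reduced_on l A u"
  shows "reduced_on l (swaps u A) (rev u)"
proof -
  have u: "valid_swaps (length A) u" "length u = n_inv A (swaps u A)"
    using assms by (auto simp: reduced_on_def)
  have "n_inv (swaps u A) A = n_inv A (swaps u A)"
    unfolding n_inv_def using inv_set_sym[OF swaps_set[OF u(1)]] by simp
  then show ?thesis using u swaps_rev[OF u(1)] assms(1) by (simp add: reduced_on_def)
qed

lemma reduced_on_append:
  assumes "reduced_on l A y" "reduced_on l (swaps y A) z"
    and "n_inv A (swaps z (swaps y A)) = n_inv A (swaps y A) + n_inv (swaps y A) (swaps z (swaps y A))"
  shows "reduced_on l A (z @ y)"
  using assms by (simp add: reduced_on_def swaps_append)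

definition is_descent :: "int list \<Rightarrow> int list \<Rightarrow> nat \<Rightarrow> bool" where
  "is_descent A W r \<longleftrightarrow> pos A (W ! r) < pos A (W ! (r - 1))"

lemma sorted_pair_in_inv_set_iff: assumes "distinct A" "distinct W" "set A = set W" "1 \<le> r" "r < length W"
  shows "sorted_pair (W ! (r - 1)) (W ! r) \<in> inv_set A W \<longleftrightarrow> is_descent A W r"
proof -
  let ?u = "W ! (r - 1)" and ?v = "W ! r"
  have ne: "?u \<noteq> ?v" using assms(2,4,5) nth_eq_iff_index_eq[of W "r-1" r] by auto
  have inA: "?u \<in> set A" "?v \<in> set A" using assms(3,4,5) by auto
  have pW: "pos W ?u = r" "pos W ?v = r + 1" using pos_nth[OF assms(2), of "r-1"] pos_nth[OF assms(2), of r] assms(4,5) by auto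
  have nA: "pos A ?u \<noteq> pos A ?v" using pos_inj[OF assms(1) inA] ne by auto
  show ?thesis
  proof (cases "?u < ?v")
    case True
    then have "sorted_pair ?u ?v = (?u, ?v)" by (simp add: sorted_pair_def)
    then show ?thesis using True inA pW nA unfolding inv_set_def is_descent_def by auto
  next
    case False
    then have "?v < ?u" using ne by auto
    then have "sorted_pair ?u ?v = (?v, ?u)" by (simp add: sorted_pair_def)
    then show ?thesis using \<open>?v < ?u\<close> inA pW nA unfolding inv_set_def is_descent_def by auto
  qed
qed

lemma n_inv_swap_descent: assumes "distinct A" "distinct W" "set A = set W" "1 \<le> r" "r < length W"
  shows "n_inv A (swapw r W) = (if is_descent A W r then n_inv A W - 1 else n_inv A W + 1)"
  using n_inv_swap[OF assms(2,4,5) assms(3)] sorted_pair_in_inv_set_iff[OF assms] by simp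

lemma n_inv_swap_descent_Suc: assumes "distinct A" "distinct W" "set A = set W" "1 \<le> r" "r < length W" "is_descent A W r"
  shows "n_inv A (swapw r W) + 1 = n_inv A W"
proof -
  have "sorted_pair (W ! (r - 1)) (W ! r) \<in> inv_set A W" using sorted_pair_in_inv_set_iff[OF assms(1-5)] assms(6) by simp
  then have "inv_set A W \<noteq> {}" by auto
  then have "n_inv A W \<noteq> 0" unfolding n_inv_def using inv_set_finite by simp
  then show ?thesis using n_inv_swap_descent[OF assms(1-5)] assms(6) by simp
qed

lemma swapw_comm: assumes "1 \<le> r" "r < length W" "1 \<le> t" "t < length W" "r + 2 \<le> t \<or> t + 2 \<le> r"
  shows "swapw r (swapw t W) = swapw t (swapw r W)"
  by (rule nth_equalityI) (use assms in \<open>auto simp: swapw_nth\<close>)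

lemma swapw_braid: assumes "1 \<le> r" "r + 1 < length W"
  shows "swapw r (swapw (r + 1) (swapw r W)) = swapw (r + 1) (swapw r (swapw (r + 1) W))"
  by (rule nth_equalityI) (use assms in \<open>auto simp: swapw_nth\<close>)

lemma swaps_same_letters: assumes "distinct A" "valid_swaps (length A) z"
  shows "distinct (swaps z A)" "set A = set (swaps z A)" "length (swaps z A) = length A"
  using swaps_distinct[OF assms(2)] swaps_set[OF assms(2)] swaps_length_mset(1)[OF assms(2)] assms(1) by auto

lemma reduced_on_Cons: assumes "distinct A" "length A = l" "reduced_on l A (r # x)"
  shows "reduced_on l A x" "is_descent A (swaps (r # x) A) r" "swaps x A = swapw r (swaps (r # x) A)"
    "n_inv A (swaps (r # x) A) = Suc (length x)" "1 \<le> r" "r < l"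
proof -
  have ok: "1 \<le> r" "r < l" "valid_swaps l x" using assms(3) by (auto simp: reduced_on_def)
  show "1 \<le> r" "r < l" using ok by auto
  define B1 where "B1 = swaps x A"
  define B where "B = swaps (r # x) A"
  have BB: "B = swapw r B1" unfolding B_def B1_def by simp
  note W1 = swaps_same_letters[OF assms(1), of x, folded B1_def]
  have W1: "distinct B1" "set A = set B1" "length B1 = l" using W1 ok(3) assms(2) by auto
  have W: "distinct B" "set A = set B" "length B = l"
    unfolding BB using W1 swapw_distinct swapw_set ok by auto
  have e: "B1 = swapw r B" unfolding BB using swapw_swapw[of r B1] ok W1(3) by simp
  then show "swaps x A = swapw r (swaps (r # x) A)" unfolding B_def B1_def .
  have le: "n_inv A B1 \<le> length x" unfolding B1_def using n_inv_swaps_le[OF assms(1)] ok(3) assms(2) by simp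
  have dB: "n_inv A B = Suc (length x)" using assms(3) unfolding B_def by (simp add: reduced_on_def)
  then show "n_inv A (swaps (r # x) A) = Suc (length x)" unfolding B_def .
  have "n_inv A B = (if is_descent A B1 r then n_inv A B1 - 1 else n_inv A B1 + 1)"
    unfolding BB using n_inv_swap_descent[OF assms(1) W1(1,2) ok(1)] ok(2) W1(3) by simp
  then have "\<not> is_descent A B1 r" "n_inv A B1 = length x" using dB le by (auto split: if_splits)
  then show "reduced_on l A x" using ok(3) unfolding B1_def by (simp add: reduced_on_def)
  have "n_inv A B1 = (if is_descent A B r then n_inv A B - 1 else n_inv A B + 1)"
    unfolding e using n_inv_swap_descent[OF assms(1) W(1,2) ok(1)] ok(2) W(3) by simp
  then have "is_descent A B r" using dB \<open>n_inv A B1 = length x\<close> by (auto split: if_splits)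
  then show "is_descent A (swaps (r # x) A) r" unfolding B_def .
qed

lemma reduced_on_exchange_commute:
  assumes A: "distinct A" "length A = l"
    and u: "reduced_on l A (r # x)" and v: "reduced_on l A (t # y)"
    and e: "swaps (r # x) A = swaps (t # y) A" and rt: "r + 2 \<le> t \<or> t + 2 \<le> r"
  obtains z where "reduced_on l A (t # z)" "reduced_on l A (r # z)"
    "swaps (t # z) A = swaps x A" "swaps (r # z) A = swaps y A"
proof -
  define B where "B = swaps (r # x) A"
  note P1 = reduced_on_Cons[OF A u, folded B_def] and P2 = reduced_on_Cons[OF A v, folded e, folded B_def]
  define B1 where "B1 = swapw r B"
  have B1x: "swaps x A = B1" using P1(3) unfolding B1_def by simp
  have W1: "distinct B1" "set A = set B1" "length B1 = l"
    using swaps_same_letters[OF A(1), of x] P1(1) A(2) unfolding B1x by (auto simp: reduced_on_def)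
  have l: "length B = l" using W1(3) unfolding B1_def by simp
  have dt: "is_descent A B1 t"
  proof -
    have "B1 ! (t - 1) = B ! (t - 1)" "B1 ! t = B ! t"
      unfolding B1_def using swapw_nth[of r B] P1(5,6) P2(5,6) l rt by auto
    then show ?thesis using P2(2) by (simp add: is_descent_def)
  qed
  define C where "C = swapw t B1"
  have dC: "n_inv A C + 1 = n_inv A B1" unfolding C_def
    by (rule n_inv_swap_descent_Suc[OF A(1) W1(1,2) P2(5)]) (use P2(6) W1(3) dt in auto)
  have WC: "distinct C" "set A = set C" unfolding C_def using W1 swapw_distinct swapw_set P2(5,6) by auto
  obtain z where z: "valid_swaps (length A) z" "swaps z A = C" "length z = n_inv A C"
    using exists_swaps_eq[OF A(1) WC] by blast
  have dB1: "n_inv A B1 = length x" using P1(1) unfolding reduced_on_def B1x by simp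
  have B2: "swaps y A = swapw t B" using P2(3) by simp
  have dB2: "n_inv A (swapw t B) = length y" using P2(1) unfolding reduced_on_def B2 by simp
  have com: "swapw r C = swapw t B"
  proof -
    have "swapw r C = swapw r (swapw r (swapw t B))" unfolding C_def B1_def
      using swapw_comm[of t B r] P1(5,6) P2(5,6) l rt by auto
    also have "\<dots> = swapw t B" using swapw_swapw[of r "swapw t B"] P1(5,6) l by simp
    finally show ?thesis .
  qed
  have ly: "length y = length x" using P1(4) P2(4) by simp
  have tC: "swapw t C = B1" unfolding C_def using swapw_swapw[of t B1] P2(5,6) W1(3) by simp
  have a1: "swaps (t # z) A = swaps x A" unfolding swaps_Cons z(2) tC B1x ..
  have a2: "swaps (r # z) A = swaps y A" unfolding swaps_Cons z(2) com B2 ..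
  show ?thesis
  proof
    show "reduced_on l A (t # z)" unfolding reduced_on_def using z A(2) P2(5,6) dC dB1 a1 B1x by simp
    show "reduced_on l A (r # z)" unfolding reduced_on_def using z A(2) P1(5,6) dC dB1 ly a2 B2 dB2 by simp
  qed (fact a1 a2)+
qed

lemma reduced_on_exchange_braid:
  assumes A: "distinct A" "length A = l"
    and u: "reduced_on l A (r # x)" and v: "reduced_on l A ((r + 1) # y)"
    and e: "swaps (r # x) A = swaps ((r + 1) # y) A"
  obtains z where "reduced_on l A ((r + 1) # r # z)" "reduced_on l A (r # (r + 1) # z)"
    "swaps ((r + 1) # r # z) A = swaps x A" "swaps (r # (r + 1) # z) A = swaps y A"
proof -
  define B where "B = swaps (r # x) A"
  note P1 = reduced_on_Cons[OF A u, folded B_def] and P2 = reduced_on_Cons[OF A v, folded e, folded B_def]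
  have r1: "1 \<le> r" "r + 2 \<le> l" using P1(5) P2(6) by auto
  define B1 where "B1 = swapw r B"
  have B1x: "swaps x A = B1" using P1(3) unfolding B1_def by simp
  have W1: "distinct B1" "set A = set B1" "length B1 = l"
    using swaps_same_letters[OF A(1), of x] P1(1) A(2) unfolding B1x by (auto simp: reduced_on_def)
  have l: "length B = l" using W1(3) unfolding B1_def by simp
  have n1: "B1 ! (r - 1) = B ! r" "B1 ! r = B ! (r - 1)" "B1 ! (r + 1) = B ! (r + 1)"
    unfolding B1_def using swapw_nth[of r B] r1 l by auto
  have d1: "is_descent A B1 (r + 1)" using P1(2) P2(2) n1 by (simp add: is_descent_def)
  define B2 where "B2 = swapw (r + 1) B1"
  have W2: "distinct B2" "set A = set B2" "length B2 = l"
    unfolding B2_def using W1 swapw_distinct swapw_set r1 by auto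
  have dd1: "n_inv A B2 + 1 = n_inv A B1" unfolding B2_def
    by (rule n_inv_swap_descent_Suc[OF A(1) W1(1,2)]) (use r1 W1(3) d1 in auto)
  have n2: "B2 ! (r - 1) = B ! r" "B2 ! r = B ! (r + 1)"
    unfolding B2_def using swapw_nth[of "r + 1" B1] r1 W1(3) n1 by auto
  have d2: "is_descent A B2 r" using P2(2) n2 by (simp add: is_descent_def)
  define C where "C = swapw r B2"
  have WC: "distinct C" "set A = set C" unfolding C_def using W2 swapw_distinct swapw_set r1 by auto
  have dd2: "n_inv A C + 1 = n_inv A B2" unfolding C_def
    by (rule n_inv_swap_descent_Suc[OF A(1) W2(1,2)]) (use r1 W2(3) d2 in auto)
  obtain z where z: "valid_swaps (length A) z" "swaps z A = C" "length z = n_inv A C"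
    using exists_swaps_eq[OF A(1) WC] by blast
  have dB1: "n_inv A B1 = length x" using P1(1) unfolding reduced_on_def B1x by simp
  have B2y: "swaps y A = swapw (r + 1) B" using P2(3) by simp
  have dB2: "n_inv A (swapw (r + 1) B) = length y" using P2(1) unfolding reduced_on_def B2y by simp
  have ly: "length y = length x" using P1(4) P2(4) by simp
  have c1: "swapw (r + 1) (swapw r C) = B1"
  proof -
    have "swapw r C = B2" unfolding C_def using swapw_swapw[of r B2] r1 W2(3) by simp
    then show ?thesis unfolding B2_def using swapw_swapw[of "r + 1" B1] r1 W1(3) by simp
  qed
  have c2: "swapw r (swapw (r + 1) C) = swapw (r + 1) B"
  proof -
    have "C = swapw r (swapw (r + 1) (swapw r B))" unfolding C_def B2_def B1_def ..
    also have "\<dots> = swapw (r + 1) (swapw r (swapw (r + 1) B))" using swapw_braid[of r B] r1 l by simp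
    finally have "swapw (r + 1) C = swapw r (swapw (r + 1) B)"
      using swapw_swapw[of "r + 1" "swapw r (swapw (r + 1) B)"] r1 l by simp
    then show ?thesis using swapw_swapw[of r "swapw (r + 1) B"] r1 l by simp
  qed
  have a1: "swaps ((r + 1) # r # z) A = swaps x A" unfolding swaps_Cons z(2) c1 B1x ..
  have a2: "swaps (r # (r + 1) # z) A = swaps y A" unfolding swaps_Cons z(2) c2 B2y ..
  show ?thesis
  proof
    show "reduced_on l A ((r + 1) # r # z)"
      unfolding reduced_on_def using z A(2) r1 dd1 dd2 dB1 a1 B1x by simp
    show "reduced_on l A (r # (r + 1) # z)"
      unfolding reduced_on_def using z A(2) r1 dd1 dd2 dB1 ly a2 B2y dB2 by simp
  qed (fact a1 a2)+
qed

lemma stp_perm: assumes "1 \<le> r" "r < l" shows "stp r \<in> perms l"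
proof -
  have inA: "stp r ` {1..l} \<subseteq> {1..l}" using assms by (auto simp: stp_def)
  have "bij_betw (stp r) {1..l} {1..l}"
    by (rule bij_betw_byWitness[where f' = "stp r"]) (use inA in auto)
  moreover have "\<forall>x. x \<notin> {1..l} \<longrightarrow> stp r x = x" using assms by (auto simp: stp_def)
  ultimately show ?thesis by (simp add: perms_def)
qed

lemma id_perm: "id \<in> perms l" by (simp add: perms_def)

lemma comp_perm: assumes "u \<in> perms l" "v \<in> perms l" shows "u \<circ> v \<in> perms l"
  using assms bij_betw_trans[of v "{1..l}" "{1..l}" u "{1..l}"] by (auto simp: perms_def)

definition perm_of :: "nat list \<Rightarrow> nat \<Rightarrow> nat" where
  "perm_of rs = foldr (\<circ>) (map stp rs) id"

lemma perm_of_Nil[simp]: "perm_of [] = id" and perm_of_Cons[simp]: "perm_of (r # rs) = stp r \<circ> perm_of rs"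
  by (simp_all add: perm_of_def)

lemma perm_of_perm: "valid_swaps l rs \<Longrightarrow> perm_of rs \<in> perms l"
proof (induction rs)
  case Nil
  then show ?case using id_perm by (simp add: id_def)
next
  case (Cons r rs)
  then have "stp r \<in> perms l" "perm_of rs \<in> perms l" using stp_perm by auto
  then show ?case unfolding perm_of_Cons by (rule comp_perm)
qed

lemma is_expr_iff: "is_expr l rs w \<longleftrightarrow> valid_swaps l rs \<and> perm_of rs = w"
  by (simp add: is_expr_def valid_swaps_def perm_of_def)

lemma perm_props: assumes "w \<in> perms l"
  shows "inj_on w {1..l}" "w ` {1..l} = {1..l}" "\<And>x. x \<notin> {1..l} \<Longrightarrow> w x = x"
  using assms by (auto simp: perms_def bij_betw_def)

lemma pact_length[simp]: "length (pact w A) = length A" unfolding pact_def by (simp del: upt_Suc)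

lemma pact_nth: assumes "k < length A"
  shows "pact w A ! k = A ! (the_inv_into {1..length A} w (Suc k) - 1)"
  using assms unfolding pact_def by (simp del: upt_Suc)

lemma pact_at: assumes "w \<in> perms l" "length A = l" "p \<in> {1..l}"
  shows "pact w A ! (w p - 1) = A ! (p - 1)"
proof -
  note P = perm_props[OF assms(1)]
  have wp: "w p \<in> {1..l}" using P(2) assms(3) by auto
  have "pact w A ! (w p - 1) = A ! (the_inv_into {1..l} w (Suc (w p - 1)) - 1)"
  proof -
    have "w p - 1 < length A" using wp assms(2) by auto
    then show ?thesis using pact_nth[of "w p - 1" A w] wp assms(2) by simp
  qed
  also have "Suc (w p - 1) = w p" using wp by simp
  also have "the_inv_into {1..l} w (w p) = p" by (rule the_inv_into_f_f[OF P(1) assms(3)])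
  finally show ?thesis .
qed

lemma pact_eqI: assumes "w \<in> perms l" "length A = l" "length B = l" "\<forall>p \<in> {1..l}. B ! (w p - 1) = A ! (p - 1)"
  shows "pact w A = B"
proof (rule nth_equalityI)
  show "length (pact w A) = length B" using assms by simp
  fix k assume k: "k < length (pact w A)"
  then have "Suc k \<in> {1..l}" using assms(2) by simp
  then obtain p where p: "p \<in> {1..l}" "w p = Suc k" using perm_props(2)[OF assms(1)] by (metis imageE)
  have "pact w A ! k = pact w A ! (w p - 1)" using p by simp
  also have "\<dots> = A ! (p - 1)" by (rule pact_at[OF assms(1,2) p(1)])
  also have "\<dots> = B ! (w p - 1)" using assms(4) p(1) by simp
  also have "\<dots> = B ! k" using p by simp
  finally show "pact w A ! k = B ! k" .
qed

lemma pact_comp: assumes "u \<in> perms l" "v \<in> perms l" "length A = l"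
  shows "pact (u \<circ> v) A = pact u (pact v A)"
proof (rule pact_eqI[OF comp_perm[OF assms(1,2)] assms(3)])
  show "length (pact u (pact v A)) = l" using assms by simp
  show "\<forall>p\<in>{1..l}. pact u (pact v A) ! ((u \<circ> v) p - 1) = A ! (p - 1)"
  proof
    fix p assume p: "p \<in> {1..l}"
    have vp: "v p \<in> {1..l}" using perm_props(2)[OF assms(2)] p by auto
    have "pact u (pact v A) ! (u (v p) - 1) = pact v A ! (v p - 1)"
      by (rule pact_at[OF assms(1) _ vp]) (use assms in simp)
    also have "\<dots> = A ! (p - 1)" by (rule pact_at[OF assms(2,3) p])
    finally show "pact u (pact v A) ! ((u \<circ> v) p - 1) = A ! (p - 1)" by simp
  qed
qed

lemma pact_stp: assumes "1 \<le> r" "r < length A" shows "pact (stp r) A = swapw r A"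
proof (rule pact_eqI[OF stp_perm[OF assms] HOL.refl])
  show "length (swapw r A) = length A" by simp
  show "\<forall>p\<in>{1..length A}. swapw r A ! (stp r p - 1) = A ! (p - 1)"
  proof
    fix p assume p: "p \<in> {1..length A}"
    consider "p = r" | "p = r + 1" | "p \<noteq> r" "p \<noteq> r + 1" by auto
    then show "swapw r A ! (stp r p - 1) = A ! (p - 1)"
    proof cases
      case 1 then show ?thesis using assms by (simp add: swapw_nth stp_def)
    next
      case 2 then show ?thesis using assms by (simp add: swapw_nth stp_def)
    next
      case 3
      then have "stp r p = p" by (simp add: stp_def)
      moreover have "p - 1 \<noteq> r - 1" "p - 1 \<noteq> r" "p - 1 < length A" using 3 p assms by auto
      ultimately show ?thesis using swapw_nth[OF assms, of "p - 1"] by simp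
    qed
  qed
qed

lemma pact_perm_of: assumes "valid_swaps (length A) rs" shows "pact (perm_of rs) A = swaps rs A"
  using assms
proof (induction rs)
  case Nil
  show ?case unfolding perm_of_Nil swaps_Nil by (rule pact_eqI[OF id_perm HOL.refl]) auto
next
  case (Cons r rs)
  have ok: "1 \<le> r" "r < length A" "valid_swaps (length A) rs" using Cons.prems by auto
  have "pact (perm_of (r # rs)) A = pact (stp r) (pact (perm_of rs) A)"
    unfolding perm_of_Cons by (rule pact_comp[OF stp_perm[OF ok(1,2)] perm_of_perm[OF ok(3)] HOL.refl])
  also have "\<dots> = swapw r (swaps rs A)" using Cons.IH[OF ok(3)] pact_stp[of r "swaps rs A"] ok swaps_length_mset(1)[OF ok(3)] by simp
  finally show ?case unfolding swaps_Cons .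
qed

lemma pact_inj: assumes "distinct A" "length A = l" "u \<in> perms l" "v \<in> perms l" "pact u A = pact v A"
  shows "u = v"
proof
  fix p
  show "u p = v p"
  proof (cases "p \<in> {1..l}")
    case True
    note Pu = perm_props[OF assms(3)] and Pv = perm_props[OF assms(4)]
    have up: "u p \<in> {1..l}" using Pu(2) True by auto
    have "A ! (p - 1) = pact v A ! (u p - 1)" using pact_at[OF assms(3,2) True] assms(5) by simp
    also have "\<dots> = A ! (the_inv_into {1..l} v (u p) - 1)"
    proof -
      have "u p - 1 < length A" using up assms(2) by auto
      then show ?thesis using pact_nth[of "u p - 1" A v] up assms(2) by simp
    qed
    finally have e: "A ! (p - 1) = A ! (the_inv_into {1..l} v (u p) - 1)" .
    have q: "the_inv_into {1..l} v (u p) \<in> {1..l}"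
      using the_inv_into_into[OF Pv(1), of "u p" "{1..l}"] Pv(2) up by auto
    have "p - 1 = the_inv_into {1..l} v (u p) - 1"
      using nth_eq_iff_index_eq[OF assms(1)] e True q assms(2) by fastforce
    then have "the_inv_into {1..l} v (u p) = p" using True q by auto
    then show ?thesis using f_the_inv_into_f[OF Pv(1), of "u p"] Pv(2) up by auto
  next
    case False
    then show ?thesis using perm_props(3)[OF assms(3)] perm_props(3)[OF assms(4)] by simp
  qed
qed

lemma ex1_perm_pact: assumes "distinct A" "distinct B" "set A = set B" "length A = l"
  shows "\<exists>!w. w \<in> perms l \<and> pact w A = B"
proof -
  obtain z where z: "valid_swaps (length A) z" "swaps z A = B"
    using exists_swaps_eq[OF assms(1-3)] by blast
  have "perm_of z \<in> perms l" "pact (perm_of z) A = B"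
    using perm_of_perm[OF z(1)] pact_perm_of[OF z(1)] z(2) assms(4) by auto
  then show ?thesis using pact_inj[OF assms(1,4)] by blast
qed

lemma reduced_expr_reduced_on: assumes "distinct A" "length A = l" "reduced_expr l rs w" "w \<in> perms l"
  shows "reduced_on l A rs" "swaps rs A = pact w A"
proof -
  have e: "valid_swaps l rs" "perm_of rs = w" using assms(3) by (auto simp: reduced_expr_def is_expr_iff)
  show a: "swaps rs A = pact w A" using pact_perm_of[of A rs] e assms(2) by simp
  have le: "n_inv A (swaps rs A) \<le> length rs" using n_inv_swaps_le[OF assms(1)] e(1) assms(2) by simp
  have dp: "distinct (swaps rs A)" "set A = set (swaps rs A)" using swaps_distinct swaps_set e(1) assms(1,2) by auto
  obtain z where z: "valid_swaps (length A) z" "swaps z A = swaps rs A" "length z = n_inv A (swaps rs A)"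
    using exists_swaps_eq[OF assms(1) dp] by blast
  have "perm_of z = w"
    using pact_inj[OF assms(1,2) perm_of_perm[of l z] assms(4)] pact_perm_of[OF z(1)] z(1,2) a assms(2) by simp
  then have "is_expr l z w" using z(1) assms(2) by (simp add: is_expr_iff)
  then have "length rs \<le> length z" using assms(3) by (simp add: reduced_expr_def)
  then show "reduced_on l A rs" using le z(3) e(1) by (simp add: reduced_on_def)
qed

section \<open>Kostant partitions\<close>

definition kp_order :: "int \<times> int \<Rightarrow> int \<times> int \<Rightarrow> bool" where
  "kp_order = (\<lambda>(s1, e1) (s2, e2). s1 > s2 \<or> (s1 = s2 \<and> e1 > e2))"

definition kp_list :: "(int \<times> int) list \<Rightarrow> bool" where
  "kp_list \<rho> \<longleftrightarrow> (\<forall>(s, e) \<in> set \<rho>. s \<le> e) \<and> sorted_wrt kp_order \<rho> \<and> distinct (jw \<rho>)"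

lemma KP_iff: "\<rho> \<in> KP a b \<longleftrightarrow> kp_list \<rho> \<and> set (jw \<rho>) = {a..b + 1}"
  by (simp add: KP_def kp_list_def kp_order_def)

lemma jw_Nil[simp]: "jw [] = []" and jw_Cons[simp]: "jw ((s, e) # \<rho>) = [s..e] @ jw \<rho>"
  by (simp_all add: jw_def)

lemma jw_append[simp]: "jw (xs @ ys) = jw xs @ jw ys" by (simp add: jw_def)

lemma jw_mem: "x \<in> set (jw \<rho>) \<longleftrightarrow> (\<exists>(s, e) \<in> set \<rho>. s \<le> x \<and> x \<le> e)"
  by (induction \<rho>) auto

lemma kp_order_simp[simp]: "kp_order (s1, e1) (s2, e2) \<longleftrightarrow> s1 > s2 \<or> (s1 = s2 \<and> e1 > e2)" by (simp add: kp_order_def)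

lemma kp_list_Cons: "kp_list ((s, e) # \<rho>) \<longleftrightarrow> s \<le> e \<and> kp_list \<rho> \<and> (\<forall>y \<in> set \<rho>. kp_order (s, e) y) \<and>
    distinct ([s..e] @ jw \<rho>)"
  unfolding kp_list_def by auto

lemma kp_list_tl: "kp_list ((s, e) # \<rho>) \<Longrightarrow> kp_list \<rho>" by (simp add: kp_list_Cons)

lemma kp_list_tail_less: assumes "kp_list ((s, e) # \<rho>)" "w \<in> set (jw \<rho>)" shows "w < s"
proof -
  obtain s' e' where b: "(s', e') \<in> set \<rho>" "s' \<le> w" "w \<le> e'" using assms(2) jw_mem by blast
  have k: "kp_order (s, e) (s', e')" "s \<le> e" "distinct ([s..e] @ jw \<rho>)" using assms(1) b(1) by (auto simp: kp_list_Cons)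
  have sub: "{s'..e'} \<subseteq> set (jw \<rho>)" using b(1) jw_mem by fastforce
  have disj: "{s..e} \<inter> set (jw \<rho>) = {}" using k(3) by auto
  have "s' \<noteq> s"
  proof
    assume "s' = s"
    then have "s \<in> set (jw \<rho>)" using sub b(2,3) by auto
    then show False using disj k(2) by auto
  qed
  then have "s' < s" using k(1) by auto
  have "\<not> s \<le> e'"
  proof
    assume "s \<le> e'"
    then have "s \<in> {s'..e'}" using \<open>s' < s\<close> by auto
    then have "s \<in> set (jw \<rho>)" using sub by auto
    then show False using disj k(2) by auto
  qed
  then show ?thesis using b by auto
qed

lemma kp_list_le_head_end: assumes "kp_list ((s, e) # \<rho>)" "w \<in> set (jw ((s, e) # \<rho>))" shows "w \<le> e"
proof -
  have "s \<le> e" using assms(1) by (simp add: kp_list_Cons)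
  then show ?thesis using assms kp_list_tail_less[OF assms(1)] by fastforce
qed

lemma Cset_Cons: "Cset ((s, e) # \<rho>) = snd ` set \<rho>" by (simp add: Cset_def)

lemma kp_list_append: "kp_list (xs @ ys) \<Longrightarrow> kp_list ys"
  unfolding kp_list_def by (auto simp: sorted_wrt_append)

lemma kp_list_block_le: "kp_list \<rho> \<Longrightarrow> (s, e) \<in> set \<rho> \<Longrightarrow> s \<le> e" unfolding kp_list_def by auto

lemma block_subset_jw: "(s, e) \<in> set \<rho> \<Longrightarrow> {s..e} \<subseteq> set (jw \<rho>)" using jw_mem by fastforce

lemma pos_order_iff_no_cut: assumes "kp_list \<rho>" "x \<in> set (jw \<rho>)" "y \<in> set (jw \<rho>)" "x < y"
  shows "(pos (jw \<rho>) x < pos (jw \<rho>) y) \<longleftrightarrow> \<not> (\<exists>c \<in> Cset \<rho>. x \<le> c \<and> c < y)"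
  using assms
proof (induction \<rho>)
  case Nil
  then show ?case by simp
next
  case (Cons h \<rho>')
  obtain s e where h: "h = (s, e)" by (cases h)
  have k: "kp_list ((s, e) # \<rho>')" using Cons.prems(1) h by simp
  have k': "kp_list \<rho>'" using kp_list_tl[OF k] .
  have d: "distinct ([s..e] @ jw \<rho>')" using k by (simp add: kp_list_Cons)
  have lat: "\<And>w. w \<in> set (jw \<rho>') \<Longrightarrow> w < s" using kp_list_tail_less[OF k] by blast
  have C: "Cset (h # \<rho>') = snd ` set \<rho>'" using h Cset_Cons by simp
  have endsW: "\<And>c. c \<in> snd ` set \<rho>' \<Longrightarrow> c \<in> set (jw \<rho>')"
    using kp_list_block_le[OF k'] block_subset_jw by fastforce
  have xs: "x \<in> {s..e} \<or> x \<in> set (jw \<rho>')" and ys: "y \<in> {s..e} \<or> y \<in> set (jw \<rho>')"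
    using Cons.prems(2,3) h by auto
  have jwh: "jw (h # \<rho>') = [s..e] @ jw \<rho>'" using h by simp
  show ?case
  proof (cases "x \<in> {s..e}")
    case xin: True
    show ?thesis
    proof (cases "y \<in> {s..e}")
      case True
      have "pos (jw (h # \<rho>')) x = nat (x - s) + 1" "pos (jw (h # \<rho>')) y = nat (y - s) + 1"
        unfolding jwh using pos_append1[OF d] pos_upto xin True by auto
      moreover have "\<not> (\<exists>c \<in> Cset (h # \<rho>'). x \<le> c \<and> c < y)"
        unfolding C using endsW lat xin by fastforce
      ultimately show ?thesis using Cons.prems(4) xin True by auto
    next
      case False
      then have "y \<in> set (jw \<rho>')" using ys by auto
      then show ?thesis using lat xin Cons.prems(4) by fastforce
    qed
  next
    case xout: False
    then have xW: "x \<in> set (jw \<rho>')" using xs by auto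
    show ?thesis
    proof (cases "y \<in> {s..e}")
      case True
      have p1: "pos (jw (h # \<rho>')) x = length [s..e] + pos (jw \<rho>') x"
        unfolding jwh by (rule pos_append2[OF d xW])
      have p2: "pos (jw (h # \<rho>')) y = pos [s..e] y" unfolding jwh by (rule pos_append1[OF d], use True in simp)
      have "pos [s..e] y \<le> length [s..e]" by (rule pos_of_mem(2)) (use True in auto)
      then have "\<not> (pos (jw (h # \<rho>')) x < pos (jw (h # \<rho>')) y)" using p1 p2 by simp
      moreover
      obtain s' e' where b: "(s', e') \<in> set \<rho>'" "s' \<le> x" "x \<le> e'" using xW jw_mem by blast
      have "e' \<in> set (jw \<rho>')" using endsW b(1) by force
      then have "e' < s" using lat by blast
      then have "\<exists>c \<in> Cset (h # \<rho>'). x \<le> c \<and> c < y" unfolding C using b True by force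
      ultimately show ?thesis by simp
    next
      case False
      then have yW: "y \<in> set (jw \<rho>')" using ys by auto
      have p: "pos (jw (h # \<rho>')) x = length [s..e] + pos (jw \<rho>') x"
        "pos (jw (h # \<rho>')) y = length [s..e] + pos (jw \<rho>') y"
        unfolding jwh using pos_append2[OF d xW] pos_append2[OF d yW] by auto
      have IH: "(pos (jw \<rho>') x < pos (jw \<rho>') y) \<longleftrightarrow> \<not> (\<exists>c \<in> Cset \<rho>'. x \<le> c \<and> c < y)"
        by (rule Cons.IH[OF k' xW yW Cons.prems(4)])
      obtain h' \<rho>'' where r: "\<rho>' = h' # \<rho>''" using xW by (cases \<rho>') auto
      obtain s1 e1 where h': "h' = (s1, e1)" by (cases h')
      have "y \<le> e1" using kp_list_le_head_end[of s1 e1 \<rho>'' y] k' yW r h' by simp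
      then have "(\<exists>c \<in> snd ` set \<rho>'. x \<le> c \<and> c < y) \<longleftrightarrow> (\<exists>c \<in> Cset \<rho>'. x \<le> c \<and> c < y)"
        unfolding r h' Cset_Cons by auto
      then show ?thesis using IH p C by simp
    qed
  qed
qed

lemma kp_list_blocks_disjoint: assumes "kp_list \<rho>" "(s, e) \<in> set \<rho>" "(s', e') \<in> set \<rho>" "(s, e) \<noteq> (s', e')"
  shows "{s..e} \<inter> {s'..e'} = {}"
  using assms
proof (induction \<rho>)
  case Nil
  then show ?case by simp
next
  case (Cons h \<rho>')
  obtain s0 e0 where h: "h = (s0, e0)" by (cases h)
  have k: "kp_list ((s0, e0) # \<rho>')" using Cons.prems(1) h by simp
  have k': "kp_list \<rho>'" by (rule kp_list_tl[OF k])
  show ?case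
  proof (cases "(s, e) \<in> set \<rho>' \<and> (s', e') \<in> set \<rho>'")
    case True
    then show ?thesis using Cons.IH[OF k'] Cons.prems(4) by blast
  next
    case False
    have lat: "\<And>w. w \<in> set (jw \<rho>') \<Longrightarrow> w < s0" using kp_list_tail_less[OF k] by blast
    consider "(s, e) = (s0, e0)" "(s', e') \<in> set \<rho>'" | "(s', e') = (s0, e0)" "(s, e) \<in> set \<rho>'"
      using False Cons.prems(2,3,4) h by auto
    then show ?thesis
    proof cases
      case 1
      then show ?thesis using block_subset_jw[OF 1(2)] lat by fastforce
    next
      case 2
      then show ?thesis using block_subset_jw[OF 2(2)] lat by fastforce
    qed
  qed
qed

lemma sorted_kp_order_unique: "sorted_wrt kp_order xs \<Longrightarrow> sorted_wrt kp_order ys \<Longrightarrow> set xs = set ys \<Longrightarrow> xs = ys"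
proof (induction xs arbitrary: ys)
  case Nil
  then show ?case by simp
next
  case (Cons x xs)
  obtain y ys' where y: "ys = y # ys'" using Cons.prems(3) by (cases ys) auto
  have asym: "\<And>p q. kp_order p q \<Longrightarrow> \<not> kp_order q p" unfolding kp_order_def by auto
  have irr: "\<And>p. \<not> kp_order p p" unfolding kp_order_def by auto
  have "x = y"
  proof (rule ccontr)
    assume ne: "x \<noteq> y"
    have "x \<in> set ys'" using Cons.prems(3) y ne by auto
    then have "kp_order y x" using Cons.prems(2) y by auto
    moreover have "y \<in> set xs" using Cons.prems(3) y ne by auto
    then have "kp_order x y" using Cons.prems(1) by auto
    ultimately show False using asym by blast
  qed
  moreover have "x \<notin> set xs"
  proof
    assume "x \<in> set xs"
    then have "kp_order x x" using Cons.prems(1) by simp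
    then show False using irr by blast
  qed
  moreover have "y \<notin> set ys'"
  proof
    assume "y \<in> set ys'"
    then have "kp_order y y" using Cons.prems(2) y by simp
    then show False using irr by blast
  qed
  ultimately have "set xs = set ys'" using Cons.prems(3) y by auto
  then have "xs = ys'" using Cons.IH Cons.prems(1,2) y by auto
  then show ?case using \<open>x = y\<close> y by simp
qed

definition is_block :: "int set \<Rightarrow> int \<Rightarrow> int \<Rightarrow> int \<times> int \<Rightarrow> bool" where
  "is_block C a b p \<longleftrightarrow> a \<le> fst p \<and> fst p \<le> snd p \<and> snd p \<le> b + 1 \<and> (fst p = a \<or> fst p - 1 \<in> C)
     \<and> (snd p = b + 1 \<or> snd p \<in> C) \<and> (\<forall>c \<in> C. \<not> (fst p \<le> c \<and> c < snd p))"

lemma Cset_mem: "(s, e) \<in> set (tl \<rho>) \<Longrightarrow> e \<in> Cset \<rho>" unfolding Cset_def by force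

lemma is_block_of_mem: assumes "\<rho> \<in> KP a b" "(s, e) \<in> set \<rho>" shows "is_block (Cset \<rho>) a b (s, e)"
proof -
  have k: "kp_list \<rho>" and S: "set (jw \<rho>) = {a..b + 1}" using assms(1) KP_iff by auto
  have se: "s \<le> e" by (rule kp_list_block_le[OF k assms(2)])
  have rng: "a \<le> s" "e \<le> b + 1" using block_subset_jw[OF assms(2)] S se by auto
  obtain h \<rho>' where r: "\<rho> = h # \<rho>'" using assms(2) by (cases \<rho>) auto
  obtain s0 e0 where h: "h = (s0, e0)" by (cases h)
  have k0: "kp_list ((s0, e0) # \<rho>')" using k r h by simp
  have e1: "e = b + 1 \<or> e \<in> Cset \<rho>"
  proof (cases "(s, e) = h")
    case True
    have "b + 1 \<in> set (jw ((s0, e0) # \<rho>'))" using S r h rng se by (simp del: jw_Cons)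
    then have "b + 1 \<le> e0" by (rule kp_list_le_head_end[OF k0])
    then show ?thesis using True h rng by simp
  next
    case False
    then have "(s, e) \<in> set (tl \<rho>)" using assms(2) r by simp
    then show ?thesis using Cset_mem by blast
  qed
  have s1: "s = a \<or> s - 1 \<in> Cset \<rho>"
  proof (cases "s = a")
    case False
    then have "s - 1 \<in> set (jw \<rho>)" using S rng se by auto
    then obtain s'' e'' where b'': "(s'', e'') \<in> set \<rho>" "s'' \<le> s - 1" "s - 1 \<le> e''" using jw_mem by blast
    have ne: "(s'', e'') \<noteq> (s, e)" using b'' by auto
    have "e'' = s - 1"
    proof (rule ccontr)
      assume "e'' \<noteq> s - 1"
      then have "s \<in> {s''..e''}" using b'' by auto
      moreover have "s \<in> {s..e}" using se by auto
      ultimately show False using kp_list_blocks_disjoint[OF k b''(1) assms(2) ne] by auto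
    qed
    moreover have "(s'', e'') \<in> set (tl \<rho>)"
    proof (rule ccontr)
      assume "(s'', e'') \<notin> set (tl \<rho>)"
      then have hh: "(s'', e'') = (s0, e0)" using b''(1) r h by auto
      then have "(s, e) \<in> set \<rho>'" using assms(2) r h ne by auto
      then have "{s..e} \<subseteq> set (jw \<rho>')" by (rule block_subset_jw)
      then have "s \<in> set (jw \<rho>')" using se by auto
      then have "s < s0" using kp_list_tail_less[OF k0] by blast
      then show False using hh b'' by auto
    qed
    ultimately show ?thesis using Cset_mem by blast
  qed simp
  have nc: "\<forall>c \<in> Cset \<rho>. \<not> (s \<le> c \<and> c < e)"
  proof (intro ballI notI)
    fix c assume c: "c \<in> Cset \<rho>" "s \<le> c \<and> c < e"
    then obtain s' where b': "(s', c) \<in> set (tl \<rho>)" unfolding Cset_def by auto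
    then have b'': "(s', c) \<in> set \<rho>" using r by simp
    have ne: "(s', c) \<noteq> (s, e)" using c by auto
    have "c \<in> {s'..c}" using kp_list_block_le[OF k b''] by auto
    moreover have "c \<in> {s..e}" using c by auto
    ultimately show False using kp_list_blocks_disjoint[OF k b'' assms(2) ne] by auto
  qed
  show ?thesis unfolding is_block_def using se rng e1 s1 nc by simp
qed

lemma mem_of_is_block: assumes "\<rho> \<in> KP a b" "is_block (Cset \<rho>) a b (s, e)" shows "(s, e) \<in> set \<rho>"
proof -
  have k: "kp_list \<rho>" and S: "set (jw \<rho>) = {a..b + 1}" using assms(1) KP_iff by auto
  have g: "a \<le> s" "s \<le> e" "e \<le> b + 1" "s = a \<or> s - 1 \<in> Cset \<rho>" "e = b + 1 \<or> e \<in> Cset \<rho>"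
    "\<forall>c \<in> Cset \<rho>. \<not> (s \<le> c \<and> c < e)" using assms(2) unfolding is_block_def by auto
  have "s \<in> set (jw \<rho>)" using S g by auto
  then obtain s1 e1 where b: "(s1, e1) \<in> set \<rho>" "s1 \<le> s" "s \<le> e1" using jw_mem by blast
  have g1: "a \<le> s1" "s1 \<le> e1" "e1 \<le> b + 1" "s1 = a \<or> s1 - 1 \<in> Cset \<rho>" "e1 = b + 1 \<or> e1 \<in> Cset \<rho>"
    "\<forall>c \<in> Cset \<rho>. \<not> (s1 \<le> c \<and> c < e1)" using is_block_of_mem[OF assms(1) b(1)] unfolding is_block_def by auto
  have "s1 = s"
  proof (rule ccontr)
    assume "s1 \<noteq> s"
    then have "s1 < s" using b by auto
    then have "s - 1 \<in> Cset \<rho>" using g(4) g1(1) by auto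
    then show False using g1(6) \<open>s1 < s\<close> b(3) by force
  qed
  moreover have "e1 = e"
  proof (rule ccontr)
    assume "e1 \<noteq> e"
    then consider "e1 < e" | "e < e1" by linarith
    then show False
    proof cases
      case 1
      then have "e1 \<in> Cset \<rho>" using g1(5) g(3) by auto
      then show False using g(6) 1 b(3) by force
    next
      case 2
      then have "e \<in> Cset \<rho>" using g(5) g1(3) by auto
      then show False using g1(6) 2 b(2) g(2) by force
    qed
  qed
  ultimately show ?thesis using b(1) by simp
qed

lemma KP_eq_of_Cset_eq: assumes "\<tau>1 \<in> KP a b" "\<tau>2 \<in> KP a b" "Cset \<tau>1 = Cset \<tau>2" shows "\<tau>1 = \<tau>2"
proof -
  have "set \<tau>1 = set \<tau>2"
  proof (rule set_eqI)
    fix p :: "int \<times> int"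
    obtain s e where p: "p = (s, e)" by (cases p)
    show "p \<in> set \<tau>1 \<longleftrightarrow> p \<in> set \<tau>2"
    proof
      assume "p \<in> set \<tau>1"
      then have "is_block (Cset \<tau>1) a b (s, e)" using is_block_of_mem[OF assms(1), of s e] p by simp
      then have "is_block (Cset \<tau>2) a b (s, e)" using assms(3) by simp
      then show "p \<in> set \<tau>2" using mem_of_is_block[OF assms(2), of s e] p by simp
    next
      assume "p \<in> set \<tau>2"
      then have "is_block (Cset \<tau>2) a b (s, e)" using is_block_of_mem[OF assms(2), of s e] p by simp
      then have "is_block (Cset \<tau>1) a b (s, e)" using assms(3) by simp
      then show "p \<in> set \<tau>1" using mem_of_is_block[OF assms(1), of s e] p by simp
    qed
  qed
  moreover have "sorted_wrt kp_order \<tau>1" "sorted_wrt kp_order \<tau>2" using assms(1,2) unfolding KP_iff kp_list_def by auto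
  ultimately show ?thesis using sorted_kp_order_unique by blast
qed

lemma kp_list_split_block:
  assumes k: "kp_list (pre @ (s, e) # post)" and i: "s \<le> i" "i < e"
  shows "kp_list (pre @ (i + 1, e) # (s, i) # post)"
proof -
  let ?\<pi> = "pre @ (s, e) # post" and ?\<tau> = "pre @ (i + 1, e) # (s, i) # post"
  have k2: "kp_list ((s, e) # post)" using kp_list_append k by blast
  have "[s..e] = [s..i] @ [i + 1..e]" using upto_split2[of s i e] i by simp
  then have "mset (jw ?\<tau>) = mset (jw ?\<pi>)" by simp
  then have dist: "distinct (jw ?\<tau>)" using k mset_eq_imp_distinct_iff unfolding kp_list_def by blast
  have s1: "sorted_wrt kp_order pre" "sorted_wrt kp_order ((s, e) # post)"
    "\<forall>x\<in>set pre. \<forall>y\<in>set ((s, e) # post). kp_order x y"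
    using k unfolding kp_list_def sorted_wrt_append by auto
  have postlt: "s' < s" if "(s', e') \<in> set post" for s' e'
  proof -
    have "s' \<le> e'" using kp_list_block_le[OF kp_list_tl[OF k2] that] .
    then have "s' \<in> set (jw post)" using block_subset_jw[OF that] by auto
    then show "s' < s" using kp_list_tail_less[OF k2] by blast
  qed
  have prelt: "e < s0" if h: "(s0, e0) \<in> set pre" for s0 e0
  proof -
    obtain p1 p2 where pp: "pre = p1 @ (s0, e0) # p2" using split_list[OF h] by blast
    have "kp_list ((s0, e0) # p2 @ (s, e) # post)" using kp_list_append[of p1] k pp by simp
    moreover have "e \<in> set (jw (p2 @ (s, e) # post))" using i by auto
    ultimately show "e < s0" using kp_list_tail_less by blast
  qed
  have "sorted_wrt kp_order ?\<tau>"
    unfolding sorted_wrt_append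
  proof (intro conjI)
    show "sorted_wrt kp_order ((i + 1, e) # (s, i) # post)"
      using s1(2) postlt i by fastforce
    show "\<forall>x\<in>set pre. \<forall>y\<in>set ((i + 1, e) # (s, i) # post). kp_order x y"
    proof (intro ballI)
      fix x y assume x: "x \<in> set pre" and y: "y \<in> set ((i + 1, e) # (s, i) # post)"
      obtain s0 e0 where x0: "x = (s0, e0)" by (cases x)
      have "e < s0" using prelt x x0 by simp
      then show "kp_order x y" using y s1(3) x x0 i by auto
    qed
  qed (rule s1(1))
  moreover have "\<forall>(s', e') \<in> set ?\<tau>. s' \<le> e'" using k i unfolding kp_list_def by auto
  ultimately show ?thesis using dist unfolding kp_list_def by simp
qed

lemma refn_exists: assumes pi: "\<pi> \<in> KP a b" and i: "i \<in> {a..b}" "i \<notin> Cset \<pi>"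
  shows "\<exists>\<tau>. \<tau> \<in> KP a b \<and> Cset \<tau> = Cset \<pi> \<union> {i}"
proof -
  have k: "kp_list \<pi>" and S: "set (jw \<pi>) = {a..b + 1}" using pi KP_iff by auto
  have "i \<in> set (jw \<pi>)" using S i by auto
  then obtain s e where b: "(s, e) \<in> set \<pi>" "s \<le> i" "i \<le> e" using jw_mem by blast
  obtain pre post where sp: "\<pi> = pre @ (s, e) # post" using split_list[OF b(1)] by blast
  have k2: "kp_list ((s, e) # post)" using kp_list_append k sp by blast
  have ie: "i \<noteq> e"
  proof (cases pre)
    case Nil
    have "a \<le> b + 1" using i by auto
    then have "b + 1 \<in> set (jw ((s, e) # post))" using S sp Nil by (simp del: jw_Cons)
    then have "b + 1 \<le> e" by (rule kp_list_le_head_end[OF k2])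
    then show ?thesis using i by auto
  next
    case (Cons p pre')
    then have "e \<in> Cset \<pi>" unfolding Cset_def sp by force
    then show ?thesis using i by auto
  qed
  define \<tau> where "\<tau> = pre @ (i + 1, e) # (s, i) # post"
  have "kp_list \<tau>" unfolding \<tau>_def by (rule kp_list_split_block) (use k sp b ie in auto)
  moreover have "set (jw \<tau>) = set (jw \<pi>)"
    unfolding \<tau>_def sp using upto_split2[of s i e] b by auto
  moreover have "Cset \<tau> = Cset \<pi> \<union> {i}"
    by (cases pre) (auto simp: \<tau>_def sp Cset_def)
  ultimately show ?thesis using S KP_iff by blast
qed

lemma refn_props: assumes "\<pi> \<in> KP a b" "i \<in> {a..b}" "i \<notin> Cset \<pi>"
  shows "refn a b i \<pi> \<in> KP a b" "Cset (refn a b i \<pi>) = Cset \<pi> \<union> {i}"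
proof -
  obtain \<tau> where t: "\<tau> \<in> KP a b" "Cset \<tau> = Cset \<pi> \<union> {i}" using refn_exists[OF assms] by blast
  have "refn a b i \<pi> = \<tau>" unfolding refn_def
  proof (rule the_equality)
    show "\<tau> \<in> KP a b \<and> Cset \<tau> = Cset \<pi> \<union> {i}" using t by simp
    fix \<tau>' assume "\<tau>' \<in> KP a b \<and> Cset \<tau>' = Cset \<pi> \<union> {i}"
    then show "\<tau>' = \<tau>" using KP_eq_of_Cset_eq[of \<tau>' a b \<tau>] t by simp
  qed
  then show "refn a b i \<pi> \<in> KP a b" "Cset (refn a b i \<pi>) = Cset \<pi> \<union> {i}" using t by auto
qed

definition has_cut :: "(int \<times> int) list \<Rightarrow> int \<Rightarrow> int \<Rightarrow> bool" where
  "has_cut \<rho> x y \<longleftrightarrow> (\<exists>c \<in> Cset \<rho>. x \<le> c \<and> c < y)"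

lemma inv_set_KP: assumes "\<rho>1 \<in> KP a b" "\<rho>2 \<in> KP a b"
  shows "inv_set (jw \<rho>1) (jw \<rho>2) = {(x, y). x \<in> {a..b + 1} \<and> y \<in> {a..b + 1} \<and> x < y \<and> has_cut \<rho>1 x y \<noteq> has_cut \<rho>2 x y}"
proof -
  have k1: "kp_list \<rho>1" "set (jw \<rho>1) = {a..b + 1}" and k2: "kp_list \<rho>2" "set (jw \<rho>2) = {a..b + 1}"
    using assms KP_iff by auto
  show ?thesis
  proof (rule set_eqI, clarify)
    fix x y
    show "(x, y) \<in> inv_set (jw \<rho>1) (jw \<rho>2) \<longleftrightarrow>
      (x, y) \<in> {(x, y). x \<in> {a..b + 1} \<and> y \<in> {a..b + 1} \<and> x < y \<and> has_cut \<rho>1 x y \<noteq> has_cut \<rho>2 x y}"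
    proof (cases "x \<in> {a..b + 1} \<and> y \<in> {a..b + 1} \<and> x < y")
      case True
      then have "x \<in> set (jw \<rho>1)" "y \<in> set (jw \<rho>1)" "x \<in> set (jw \<rho>2)" "y \<in> set (jw \<rho>2)" using k1 k2 by auto
      then show ?thesis unfolding inv_set_def has_cut_def using pos_order_iff_no_cut[OF k1(1)] pos_order_iff_no_cut[OF k2(1)] True by auto
    next
      case False
      then show ?thesis unfolding inv_set_def using k1 by auto
    qed
  qed
qed

lemma n_inv_KP_add: assumes "\<sigma> \<in> KP a b" "\<tau> \<in> KP a b" "\<pi> \<in> KP a b" "Cset \<pi> \<subseteq> Cset \<tau>" "Cset \<tau> \<subseteq> Cset \<sigma>"
  shows "n_inv (jw \<sigma>) (jw \<pi>) = n_inv (jw \<sigma>) (jw \<tau>) + n_inv (jw \<tau>) (jw \<pi>)"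
proof -
  have m1: "has_cut \<pi> x y \<Longrightarrow> has_cut \<tau> x y" and m2: "has_cut \<tau> x y \<Longrightarrow> has_cut \<sigma> x y" for x y
    using assms(4,5) unfolding has_cut_def by auto
  have e: "inv_set (jw \<sigma>) (jw \<pi>) = inv_set (jw \<sigma>) (jw \<tau>) \<union> inv_set (jw \<tau>) (jw \<pi>)"
    unfolding inv_set_KP[OF assms(1,3)] inv_set_KP[OF assms(1,2)] inv_set_KP[OF assms(2,3)] using m1 m2 by blast
  have d: "inv_set (jw \<sigma>) (jw \<tau>) \<inter> inv_set (jw \<tau>) (jw \<pi>) = {}"
    unfolding inv_set_KP[OF assms(1,2)] inv_set_KP[OF assms(2,3)] using m1 m2 by blast
  show ?thesis unfolding n_inv_def e using card_Un_disjoint[OF inv_set_finite inv_set_finite d] by simp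
qed

lemma adjacent_inv_set_refn: assumes "\<tau> \<in> KP a b" "\<pi> \<in> KP a b" "Cset \<tau> = Cset \<pi> \<union> {i}" "i \<notin> Cset \<pi>" "i \<in> {a..b}"
  shows "{p \<in> inv_set (jw \<tau>) (jw \<pi>). snd p = fst p + 1} = {(i, i + 1)}"
proof -
  have c: "has_cut \<rho> x (x + 1) \<longleftrightarrow> x \<in> Cset \<rho>" for \<rho> x unfolding has_cut_def by auto
  show ?thesis unfolding inv_set_KP[OF assms(1,2)] using c assms(3,4,5) by auto
qed

section \<open>The KLR relations on words with distinct letters\<close>

locale klr_multiplicity_free = klr +
  assumes count_le_one: "count \<theta> x \<le> 1"
begin

lemma words_distinct: assumes "j \<in> words \<theta>" shows "distinct j"
proof -
  have "count (mset j) a \<le> 1" for a using count_le_one assms by (simp add: words_def)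
  then show ?thesis
    by (meson count_greater_eq_one_iff count_mset_0_iff distinct_count_atmost_1 in_multiset_in_set nle_le)
qed

lemma words_length: "j \<in> words \<theta> \<Longrightarrow> length j = size \<theta>"
  by (metis mem_Collect_eq size_mset words_def)

lemma words_set_eq: "j \<in> words \<theta> \<Longrightarrow> k \<in> words \<theta> \<Longrightarrow> set j = set k"
  by (metis mem_Collect_eq set_mset_mset words_def)

lemma swaps_words: assumes "valid_swaps (size \<theta>) z" "j \<in> words \<theta>" shows "swaps z j \<in> words \<theta>"
  using swaps_length_mset(2)[of j z] assms words_length[OF assms(2)] by (simp add: words_def)

lemma psis_E: assumes "valid_swaps (size \<theta>) z" "j \<in> words \<theta>"
  shows "Times (psis z) (E j) \<approx> (Times (E (swaps z j)) (psis z) :: 'k::comm_ring_1 kexp)"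
  using assms(1)
proof (induction z)
  case Nil
  have "Times (psis []) (E j) \<approx> (E j :: 'k kexp)" by (simp add: psis_Nil keq.times_one_l)
  also have "\<dots> \<approx> Times (E (swaps [] j)) (psis [])" by (simp add: psis_Nil, rule keq.sym, rule keq.times_one_r)
  finally show ?case .
next
  case (Cons r z)
  have ok: "1 \<le> r" "r < size \<theta>" "valid_swaps (size \<theta>) z" using Cons.prems by auto
  have w: "swaps z j \<in> words \<theta>" using swaps_words[OF ok(3) assms(2)] .
  have "Times (psis (r # z)) (E j) \<approx> (Times (Psi r) (Times (psis z) (E j)) :: 'k kexp)"
    unfolding psis_Cons by (rule keq.times_assoc)
  also have "\<dots> \<approx> Times (Psi r) (Times (E (swaps z j)) (psis z))" by (rule keq_times_right, rule Cons.IH[OF ok(3)])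
  also have "\<dots> \<approx> Times (Times (Psi r) (E (swaps z j))) (psis z)" by (rule keq_times_assoc')
  also have "\<dots> \<approx> Times (Times (E (swapw r (swaps z j))) (Psi r)) (psis z)"
    by (rule keq_times_left, rule keq.psi_e) (use w ok in auto)
  also have "\<dots> \<approx> Times (E (swaps (r # z) j)) (psis (r # z))" unfolding psis_Cons swaps_Cons by (rule keq.times_assoc)
  finally show ?case .
qed

lemma dlt_distinct_letters: assumes "j \<in> words \<theta>" "1 \<le> r" "r < size \<theta>"
  shows "dlt (lt j r) (lt j (r + 1)) = Zero"
proof -
  have "j ! (r - Suc 0) \<noteq> j ! r" using words_distinct[OF assms(1)] words_length[OF assms(1)] assms(2,3)
      nth_eq_iff_index_eq[of j "r - 1" r] by auto
  then show ?thesis unfolding dlt_def by simp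
qed

lemma y_psi: assumes "j \<in> words \<theta>" "1 \<le> r" "r < size \<theta>"
  shows "Times (Y q) (Times (Psi r) (E j)) \<approx> (Times (Psi r) (Times (Y (stp r q)) (E j)) :: 'k::comm_ring_1 kexp)"
proof -
  have r1: "r + 1 \<le> size \<theta>" using assms by simp
  have dz: "dlt (lt j r) (lt j (r + 1)) = (Zero :: 'k kexp)" by (rule dlt_distinct_letters[OF assms])
  consider "q = r" | "q = r + 1" | "q \<noteq> r" "q \<noteq> r + 1" by auto
  then show ?thesis
  proof cases
    case 1
    have "Times (Y q) (Times (Psi r) (E j)) \<approx> (Times (Times (Y r) (Psi r)) (E j) :: 'k kexp)" using 1 by (simp add: keq_times_assoc')
    also have "\<dots> \<approx> Times (Plus (Times (Y r) (Psi r)) Zero) (E j)" by (rule keq_times_left, rule keq.sym, rule keq.plus_zero)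
    also have "\<dots> = Times (Plus (Times (Y r) (Psi r)) (dlt (lt j r) (lt j (r + 1)))) (E j)" by (simp only: dz)
    also have "\<dots> \<approx> Times (Times (Psi r) (Y (r + 1))) (E j)" by (rule keq.sym, rule keq.psi_y1) (use assms r1 in auto)
    also have "\<dots> \<approx> Times (Psi r) (Times (Y (stp r q)) (E j))" using 1 by (simp add: stp_simps keq.times_assoc)
    finally show ?thesis .
  next
    case 2
    have "Times (Y q) (Times (Psi r) (E j)) \<approx> (Times (Times (Y (r + 1)) (Psi r)) (E j) :: 'k kexp)" using 2 by (simp add: keq_times_assoc')
    also have "\<dots> \<approx> Times (Plus (Times (Psi r) (Y r)) (dlt (lt j r) (lt j (r + 1)))) (E j)"
      by (rule keq.y1_psi) (use assms r1 in auto)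
    also have "\<dots> = Times (Plus (Times (Psi r) (Y r)) Zero) (E j)" by (simp only: dz)
    also have "\<dots> \<approx> Times (Times (Psi r) (Y r)) (E j)" by (rule keq_times_left, rule keq.plus_zero)
    also have "\<dots> \<approx> Times (Psi r) (Times (Y (stp r q)) (E j))" using 2 by (simp add: stp_def keq.times_assoc)
    finally show ?thesis .
  next
    case 3
    have "Times (Y q) (Times (Psi r) (E j)) \<approx> (Times (Times (Y q) (Psi r)) (E j) :: 'k kexp)" by (rule keq_times_assoc')
    also have "\<dots> \<approx> Times (Times (Psi r) (Y q)) (E j)" by (rule keq_times_left, rule keq.sym, rule keq.psi_y) (use 3 in auto)
    also have "\<dots> \<approx> Times (Psi r) (Times (Y (stp r q)) (E j))" using 3 by (simp add: stp_simps keq.times_assoc)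
    finally show ?thesis .
  qed
qed

lemma y_psis: assumes "valid_swaps (size \<theta>) z" "j \<in> words \<theta>"
  shows "Times (Y q) (Times (psis z) (E j)) \<approx> (Times (psis z) (Times (Y (fold stp z q)) (E j)) :: 'k::comm_ring_1 kexp)"
  using assms(1)
proof (induction z arbitrary: q)
  case Nil
  have "Times (Y q) (Times (psis []) (E j)) \<approx> (Times (Y q) (E j) :: 'k kexp)" by (simp add: psis_Nil, rule keq_times_right, rule keq.times_one_l)
  also have "\<dots> \<approx> Times (psis []) (Times (Y (fold stp [] q)) (E j))" by (simp add: psis_Nil, rule keq.sym, rule keq.times_one_l)
  finally show ?case .
next
  case (Cons r z)
  have ok: "1 \<le> r" "r < size \<theta>" "valid_swaps (size \<theta>) z" using Cons.prems by auto
  have w: "swaps z j \<in> words \<theta>" using swaps_words[OF ok(3) assms(2)] .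
  let ?P = "psis z :: 'k kexp" and ?E = "E j :: 'k kexp" and ?E' = "E (swaps z j) :: 'k kexp"
  let ?q' = "stp r q"
  have "Times (Y q) (Times (psis (r # z)) ?E) \<approx> Times (Y q) (Times (Psi r) (Times ?P ?E))"
    unfolding psis_Cons by (rule keq_times_right, rule keq.times_assoc)
  also have "\<dots> \<approx> Times (Y q) (Times (Psi r) (Times ?E' ?P))" by (rule keq_times_right, rule keq_times_right, rule psis_E[OF ok(3) assms(2)])
  also have "\<dots> \<approx> Times (Y q) (Times (Times (Psi r) ?E') ?P)" by (rule keq_times_right, rule keq_times_assoc')
  also have "\<dots> \<approx> Times (Times (Y q) (Times (Psi r) ?E')) ?P" by (rule keq_times_assoc')
  also have "\<dots> \<approx> Times (Times (Psi r) (Times (Y ?q') ?E')) ?P" by (rule keq_times_left, rule y_psi[OF w ok(1,2)])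
  also have "\<dots> \<approx> Times (Psi r) (Times (Times (Y ?q') ?E') ?P)" by (rule keq.times_assoc)
  also have "\<dots> \<approx> Times (Psi r) (Times (Y ?q') (Times ?E' ?P))" by (rule keq_times_right, rule keq.times_assoc)
  also have "\<dots> \<approx> Times (Psi r) (Times (Y ?q') (Times ?P ?E))" by (rule keq_times_right, rule keq_times_right, rule keq.sym, rule psis_E[OF ok(3) assms(2)])
  also have "\<dots> \<approx> Times (Psi r) (Times ?P (Times (Y (fold stp z ?q')) ?E))" by (rule keq_times_right, rule Cons.IH[OF ok(3)])
  also have "\<dots> \<approx> Times (psis (r # z)) (Times (Y (fold stp (r # z) q)) ?E)" unfolding psis_Cons by (simp add: keq_times_assoc')
  finally show ?case .
qed

lemma pos_swaps: assumes "valid_swaps (size \<theta>) z" "j \<in> words \<theta>" "x \<in> set j"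
  shows "fold stp z (pos (swaps z j) x) = pos j x"
  using assms(1)
proof (induction z)
  case (Cons r z)
  have ok: "1 \<le> r" "r < size \<theta>" "valid_swaps (size \<theta>) z" using Cons.prems by auto
  have w: "swaps z j \<in> words \<theta>" using swaps_words[OF ok(3) assms(2)] .
  have xs: "x \<in> set (swaps z j)" using words_set_eq[OF w assms(2)] assms(3) by simp
  have "pos (swaps (r # z) j) x = stp r (pos (swaps z j) x)"
    using pos_swapw[OF words_distinct[OF w] ok(1) _ xs] ok words_length[OF w] by simp
  then show ?case using Cons.IH[OF ok(3)] by simp
qed simp

definition commutes_E :: "int list \<Rightarrow> 'k::comm_ring_1 kexp \<Rightarrow> bool" where
  "commutes_E j x \<longleftrightarrow> Times x (E j) \<approx> Times (E j) x"

lemma commutes_E_Y: assumes "j \<in> words \<theta>" shows "commutes_E j (Y p :: 'k::comm_ring_1 kexp)"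
  unfolding commutes_E_def
proof (cases "1 \<le> p \<and> p \<le> size \<theta>")
  case True
  then show "Times (Y p) (E j) \<approx> (Times (E j) (Y p) :: 'k kexp)" using keq.y_e assms by blast
next
  case False
  then have z: "(Y p :: 'k kexp) \<approx> Zero" by (intro keq.y_out) auto
  have "Times (Y p) (E j) \<approx> (Times Zero (E j) :: 'k kexp)" by (rule keq_times_left, rule z)
  also have "\<dots> \<approx> Zero" by (rule keq_zero_times)
  also have "\<dots> \<approx> Times (E j) Zero" by (rule keq.sym, rule keq_times_zero)
  also have "\<dots> \<approx> Times (E j) (Y p)" by (rule keq_times_right, rule keq.sym, rule z)
  finally show "Times (Y p) (E j) \<approx> (Times (E j) (Y p) :: 'k kexp)" .
qed

lemma commutes_E_Sc: "commutes_E j (Sc c)" unfolding commutes_E_def by (rule keq.sc_central)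
lemma commutes_E_Plus: assumes "commutes_E j x" "commutes_E j y" shows "commutes_E j (Plus x y)"
  unfolding commutes_E_def
proof -
  have "Times (Plus x y) (E j) \<approx> Plus (Times x (E j)) (Times y (E j))" by (rule keq.distrib_r)
  also have "\<dots> \<approx> Plus (Times (E j) x) (Times (E j) y)"
    by (rule keq.cong_plus) (use assms in \<open>auto simp: commutes_E_def\<close>)
  also have "\<dots> \<approx> Times (E j) (Plus x y)" by (rule keq.sym, rule keq.distrib_l)
  finally show "Times (Plus x y) (E j) \<approx> Times (E j) (Plus x y)" .
qed

lemma commutes_E_Neg: assumes "commutes_E j x" shows "commutes_E j (Neg x)"
  unfolding commutes_E_def
proof -
  have "Times (Neg x) (E j) \<approx> Neg (Times x (E j))" by (rule keq_neg_times)
  also have "\<dots> \<approx> Neg (Times (E j) x)" by (rule keq.cong_neg) (use assms in \<open>simp add: commutes_E_def\<close>)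
  also have "\<dots> \<approx> Times (E j) (Neg x)" by (rule keq.sym, rule keq_times_neg)
  finally show "Times (Neg x) (E j) \<approx> Times (E j) (Neg x)" .
qed

lemma commutes_E_Times: assumes "commutes_E j x" "commutes_E j y" shows "commutes_E j (Times x y)"
  unfolding commutes_E_def
proof -
  have "Times (Times x y) (E j) \<approx> Times x (Times y (E j))" by (rule keq.times_assoc)
  also have "\<dots> \<approx> Times x (Times (E j) y)" by (rule keq_times_right) (use assms in \<open>simp add: commutes_E_def\<close>)
  also have "\<dots> \<approx> Times (Times x (E j)) y" by (rule keq_times_assoc')
  also have "\<dots> \<approx> Times (Times (E j) x) y" by (rule keq_times_left) (use assms in \<open>simp add: commutes_E_def\<close>)
  also have "\<dots> \<approx> Times (E j) (Times x y)" by (rule keq.times_assoc)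
  finally show "Times (Times x y) (E j) \<approx> Times (E j) (Times x y)" .
qed

definition scaled_diff :: "nat \<Rightarrow> nat \<Rightarrow> 'k::comm_ring_1 \<Rightarrow> 'k kexp" where
  "scaled_diff p q c = Times (Sc c) (Minus (Y p) (Y q))"

lemma commutes_E_scaled_diff: "j \<in> words \<theta> \<Longrightarrow> commutes_E j (scaled_diff p q c)"
  unfolding scaled_diff_def by (intro commutes_E_Times commutes_E_Sc commutes_E_Plus commutes_E_Neg commutes_E_Y)

lemma diff_psis: assumes "valid_swaps (size \<theta>) z" "j \<in> words \<theta>"
  shows "Times (Minus (Y p) (Y q)) (Times (psis z) (E j)) \<approx>
         (Times (psis z) (Times (Minus (Y (fold stp z p)) (Y (fold stp z q))) (E j)) :: 'k::comm_ring_1 kexp)"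
proof -
  let ?P = "psis z :: 'k kexp" and ?E = "E j :: 'k kexp" and ?X = "Times (psis z) (E j) :: 'k kexp"
  let ?p = "fold stp z p" and ?q = "fold stp z q"
  note yp = y_psis[OF assms]
  have "Times (Minus (Y p) (Y q)) ?X \<approx> Plus (Times (Y p) ?X) (Times (Neg (Y q)) ?X)" by (rule keq.distrib_r)
  also have "\<dots> \<approx> Plus (Times (Y p) ?X) (Neg (Times (Y q) ?X))" by (rule keq_plus_right, rule keq_neg_times)
  also have "\<dots> \<approx> Plus (Times ?P (Times (Y ?p) ?E)) (Neg (Times ?P (Times (Y ?q) ?E)))"
    by (rule keq.cong_plus, rule yp, rule keq.cong_neg, rule yp)
  also have "\<dots> \<approx> Plus (Times ?P (Times (Y ?p) ?E)) (Times ?P (Neg (Times (Y ?q) ?E)))" by (rule keq_plus_right, rule keq.sym, rule keq_times_neg)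
  also have "\<dots> \<approx> Times ?P (Plus (Times (Y ?p) ?E) (Neg (Times (Y ?q) ?E)))" by (rule keq.sym, rule keq.distrib_l)
  also have "\<dots> \<approx> Times ?P (Plus (Times (Y ?p) ?E) (Times (Neg (Y ?q)) ?E))" by (rule keq_times_right, rule keq_plus_right, rule keq.sym, rule keq_neg_times)
  also have "\<dots> \<approx> Times ?P (Times (Minus (Y ?p) (Y ?q)) ?E)" by (rule keq_times_right, rule keq.sym, rule keq.distrib_r)
  finally show ?thesis .
qed

lemma scaled_diff_psis: assumes "valid_swaps (size \<theta>) z" "j \<in> words \<theta>"
  shows "Times (scaled_diff p q c) (Times (psis z) (E j)) \<approx>
         (Times (psis z) (Times (scaled_diff (fold stp z p) (fold stp z q) c) (E j)) :: 'k::comm_ring_1 kexp)"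
proof -
  let ?P = "psis z :: 'k kexp" and ?E = "E j :: 'k kexp" and ?X = "Times (psis z) (E j) :: 'k kexp"
  let ?p = "fold stp z p" and ?q = "fold stp z q"
  note M = diff_psis[OF assms, of p q]
  have "Times (scaled_diff p q c) ?X \<approx> Times (Sc c) (Times (Minus (Y p) (Y q)) ?X)" unfolding scaled_diff_def by (rule keq.times_assoc)
  also have "\<dots> \<approx> Times (Sc c) (Times ?P (Times (Minus (Y ?p) (Y ?q)) ?E))" by (rule keq_times_right, rule M)
  also have "\<dots> \<approx> Times (Times (Sc c) ?P) (Times (Minus (Y ?p) (Y ?q)) ?E)" by (rule keq_times_assoc')
  also have "\<dots> \<approx> Times (Times ?P (Sc c)) (Times (Minus (Y ?p) (Y ?q)) ?E)" by (rule keq_times_left, rule keq.sc_central)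
  also have "\<dots> \<approx> Times ?P (Times (Sc c) (Times (Minus (Y ?p) (Y ?q)) ?E))" by (rule keq.times_assoc)
  also have "\<dots> \<approx> Times ?P (Times (scaled_diff ?p ?q c) ?E)" unfolding scaled_diff_def by (rule keq_times_right, rule keq_times_assoc')
  finally show ?thesis .
qed

lemma psi_psi_psis: assumes "valid_swaps (size \<theta>) z" "j \<in> words \<theta>" "1 \<le> r" "r < size \<theta>"
  shows "Times (Psi r) (Times (Psi r) (Times (psis z) (E j))) \<approx>
     (Times (Qexp (swaps z j ! (r - 1)) (swaps z j ! r) r) (Times (psis z) (E j)) :: 'k::comm_ring_1 kexp)"
proof -
  let ?P = "psis z :: 'k kexp" and ?E = "E j :: 'k kexp" and ?E' = "E (swaps z j) :: 'k kexp"
  have w: "swaps z j \<in> words \<theta>" using swaps_words[OF assms(1,2)] .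
  have "Times (Psi r) (Times (Psi r) (Times ?P ?E)) \<approx> Times (Psi r) (Times (Psi r) (Times ?E' ?P))"
    by (rule keq_times_right, rule keq_times_right, rule psis_E[OF assms(1,2)])
  also have "\<dots> \<approx> Times (Times (Times (Psi r) (Psi r)) ?E') ?P"
    using keq.times_assoc keq_times_assoc' keq_times_left keq_times_right keq.trans by metis
  also have "\<dots> \<approx> Times (Times (Qexp (lt (swaps z j) r) (lt (swaps z j) (r + 1)) r) ?E') ?P"
    by (rule keq_times_left, rule keq.psi_sq) (use w assms in auto)
  also have "\<dots> = Times (Times (Qexp (swaps z j ! (r - 1)) (swaps z j ! r) r) ?E') ?P" by simp
  also have "\<dots> \<approx> Times (Qexp (swaps z j ! (r - 1)) (swaps z j ! r) r) (Times ?E' ?P)" by (rule keq.times_assoc)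
  also have "\<dots> \<approx> Times (Qexp (swaps z j ! (r - 1)) (swaps z j ! r) r) (Times ?P ?E)"
    by (rule keq_times_right, rule keq.sym, rule psis_E[OF assms(1,2)])
  finally show ?thesis .
qed

lemma keq_times_assoc4: "Times a (Times b (Times c (Times x y))) \<approx> Times (Times (Times (Times a b) c) x) y"
proof -
  have "Times a (Times b (Times c (Times x y))) \<approx> Times a (Times b (Times (Times c x) y))" by (rule keq_times_right, rule keq_times_right, rule keq_times_assoc')
  also have "\<dots> \<approx> Times a (Times (Times b (Times c x)) y)" by (rule keq_times_right, rule keq_times_assoc')
  also have "\<dots> \<approx> Times (Times a (Times b (Times c x))) y" by (rule keq_times_assoc')
  also have "\<dots> \<approx> Times (Times (Times a (Times b c)) x) y" by (rule keq_times_left, rule keq.trans, rule keq_times_right, rule keq_times_assoc', rule keq_times_assoc')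
  also have "\<dots> \<approx> Times (Times (Times (Times a b) c) x) y" by (rule keq_times_left, rule keq_times_left, rule keq_times_assoc')
  finally show ?thesis .
qed

lemma psis_single: "psis [r] \<approx> Psi r" by (simp add: psis_Cons psis_Nil keq.times_one_r)

lemma psis_rev_Cons_psis: assumes "valid_swaps (size \<theta>) (r # z)" "j \<in> words \<theta>"
  shows "Times (psis (rev (r # z))) (Times (psis (r # z)) (E j)) \<approx>
    (Times (psis (rev z)) (Times (Qexp (swaps z j ! (r - 1)) (swaps z j ! r) r) (Times (psis z) (E j))) :: 'k::comm_ring_1 kexp)"
proof -
  have ok: "1 \<le> r" "r < size \<theta>" "valid_swaps (size \<theta>) z" using assms(1) by auto
  let ?R = "psis (rev z) :: 'k kexp" and ?P = "psis z :: 'k kexp" and ?E = "E j :: 'k kexp"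
  have "Times (psis (rev (r # z))) (Times (psis (r # z)) ?E) \<approx> Times (Times ?R (psis [r])) (Times (psis (r # z)) ?E)"
    by (simp, rule keq_times_left, rule psis_append)
  also have "\<dots> \<approx> Times (Times ?R (Psi r)) (Times (psis (r # z)) ?E)" by (rule keq_times_left, rule keq_times_right, rule psis_single)
  also have "\<dots> \<approx> Times ?R (Times (Psi r) (Times (Times (Psi r) ?P) ?E))" unfolding psis_Cons by (rule keq.times_assoc)
  also have "\<dots> \<approx> Times ?R (Times (Psi r) (Times (Psi r) (Times ?P ?E)))" by (rule keq_times_right, rule keq_times_right, rule keq.times_assoc)
  also have "\<dots> \<approx> Times ?R (Times (Qexp (swaps z j ! (r - 1)) (swaps z j ! r) r) (Times ?P ?E))"
    by (rule keq_times_right, rule psi_psi_psis[OF ok(3) assms(2) ok(1,2)])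
  finally show ?thesis .
qed

lemma swaps_letters: assumes "valid_swaps (size \<theta>) z" "j \<in> words \<theta>" "1 \<le> r" "r < size \<theta>"
  shows "swaps z j ! (r - 1) \<noteq> swaps z j ! r" "swaps z j ! (r - 1) \<in> set j" "swaps z j ! r \<in> set j"
    "pos (swaps z j) (swaps z j ! (r - 1)) = r" "pos (swaps z j) (swaps z j ! r) = r + 1"
proof -
  have w: "swaps z j \<in> words \<theta>" by (rule swaps_words[OF assms(1,2)])
  note d = words_distinct[OF w] and l = words_length[OF w]
  show "swaps z j ! (r - 1) \<noteq> swaps z j ! r" using d l assms(3,4) nth_eq_iff_index_eq[of "swaps z j" "r - 1" r] by auto
  show "swaps z j ! (r - 1) \<in> set j" "swaps z j ! r \<in> set j" using words_set_eq[OF w assms(2)] l assms(3,4) by (metis less_imp_diff_less nth_mem)+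
  show "pos (swaps z j) (swaps z j ! (r - 1)) = r" "pos (swaps z j) (swaps z j ! r) = r + 1"
    using pos_nth[OF d, of "r-1"] pos_nth[OF d, of r] l assms(3,4) by auto
qed

lemma Qexp_non_adjacent: "u \<noteq> v \<Longrightarrow> snd (sorted_pair u v) \<noteq> fst (sorted_pair u v) + 1 \<Longrightarrow> Qexp u v r = One"
  by (auto simp: Qexp_def sorted_pair_def min_def max_def split: if_splits)

lemma Qexp_adjacent: "snd (sorted_pair u v) = fst (sorted_pair u v) + 1 \<Longrightarrow> Qexp u v r = scaled_diff r (r + 1) (of_int (v - u))"
  by (auto simp: Qexp_def sorted_pair_def min_def max_def scaled_diff_def split: if_splits)

lemma psis_rev_psis_no_adjacent: assumes "valid_swaps (size \<theta>) z" "j \<in> words \<theta>" "\<forall>p \<in> set (swap_pairs z j). snd p \<noteq> fst p + 1"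
  shows "Times (psis (rev z)) (Times (psis z) (E j)) \<approx> (E j :: 'k::comm_ring_1 kexp)"
  using assms(1,3)
proof (induction z)
  case Nil
  have "Times (psis (rev [])) (Times (psis []) (E j)) \<approx> (Times One (E j) :: 'k kexp)"
    by (simp add: psis_Nil, rule keq.times_one_l)
  also have "\<dots> \<approx> E j" by (rule keq.times_one_l)
  finally show ?case .
next
  case (Cons r z)
  have ok: "1 \<le> r" "r < size \<theta>" "valid_swaps (size \<theta>) z" using Cons.prems by auto
  note L = swaps_letters[OF ok(3) assms(2) ok(1,2)]
  have h: "snd (sorted_pair (swaps z j ! (r - 1)) (swaps z j ! r)) \<noteq> fst (sorted_pair (swaps z j ! (r - 1)) (swaps z j ! r)) + 1"
    using Cons.prems(2) by (simp add: swap_pairs_Cons)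
  have q: "Qexp (swaps z j ! (r - 1)) (swaps z j ! r) r = (One :: 'k kexp)" by (rule Qexp_non_adjacent[OF L(1) h])
  have "Times (psis (rev (r # z))) (Times (psis (r # z)) (E j)) \<approx>
      (Times (psis (rev z)) (Times One (Times (psis z) (E j))) :: 'k kexp)"
    using psis_rev_Cons_psis[where 'k='k, OF Cons.prems(1) assms(2)] by (simp only: q)
  also have "\<dots> \<approx> Times (psis (rev z)) (Times (psis z) (E j))" by (rule keq_times_right, rule keq.times_one_l)
  also have "\<dots> \<approx> E j" using Cons.IH[OF ok(3)] Cons.prems(2) by (simp add: swap_pairs_Cons)
  finally show ?case .
qed

lemma scaled_diff_adjacent: assumes "snd (sorted_pair u v) = fst (sorted_pair u v) + 1" "sorted_pair u v = (x0, x0 + 1)"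
  shows "scaled_diff (pos j u) (pos j v) (of_int (v - u)) \<approx> (Minus (Y (pos j x0)) (Y (pos j (x0 + 1))) :: 'k::comm_ring_1 kexp)"
proof -
  have "(u = x0 \<and> v = x0 + 1) \<or> (u = x0 + 1 \<and> v = x0)" using assms(2) by (auto simp: sorted_pair_def min_def max_def split: if_splits)
  then show ?thesis
  proof
    assume h: "u = x0 \<and> v = x0 + 1"
    have "scaled_diff (pos j u) (pos j v) (of_int (v - u)) = (Times (Sc 1) (Minus (Y (pos j x0)) (Y (pos j (x0 + 1)))) :: 'k kexp)"
      using h by (simp add: scaled_diff_def)
    also have "\<dots> \<approx> Times One (Minus (Y (pos j x0)) (Y (pos j (x0 + 1))))" by (rule keq_times_left, rule keq.sc_one)
    also have "\<dots> \<approx> Minus (Y (pos j x0)) (Y (pos j (x0 + 1)))" by (rule keq.times_one_l)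
    finally show ?thesis .
  next
    assume h: "u = x0 + 1 \<and> v = x0"
    have "scaled_diff (pos j u) (pos j v) (of_int (v - u)) = (Times (Sc (-1)) (Minus (Y (pos j (x0 + 1))) (Y (pos j x0))) :: 'k kexp)"
      using h by (simp add: scaled_diff_def)
    also have "\<dots> \<approx> Minus (Y (pos j x0)) (Y (pos j (x0 + 1)))" by (rule keq_Sc_minus_one_diff)
    finally show ?thesis .
  qed
qed

lemma psis_rev_psis_one_adjacent: assumes "valid_swaps (size \<theta>) z" "j \<in> words \<theta>" "filter (\<lambda>p. snd p = fst p + 1) (swap_pairs z j) = [(x0, x0 + 1)]"
  shows "Times (psis (rev z)) (Times (psis z) (E j)) \<approx>
    (Times (Minus (Y (pos j x0)) (Y (pos j (x0 + 1)))) (E j) :: 'k::comm_ring_1 kexp)"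
  using assms(1,3)
proof (induction z)
  case Nil
  then show ?case by simp
next
  case (Cons r z)
  have ok: "1 \<le> r" "r < size \<theta>" "valid_swaps (size \<theta>) z" using Cons.prems by auto
  note L = swaps_letters[OF ok(3) assms(2) ok(1,2)]
  let ?u = "swaps z j ! (r - 1)" and ?v = "swaps z j ! r"
  let ?R = "psis (rev z) :: 'k kexp" and ?P = "psis z :: 'k kexp" and ?E = "E j :: 'k kexp"
  let ?M = "Minus (Y (pos j x0)) (Y (pos j (x0 + 1))) :: 'k kexp"
  show ?case
  proof (cases "snd (sorted_pair ?u ?v) = fst (sorted_pair ?u ?v) + 1")
    case True
    have f: "filter (\<lambda>p. snd p = fst p + 1) (swap_pairs z j) = []" and op: "sorted_pair ?u ?v = (x0, x0 + 1)"
      using Cons.prems(2) True by (simp_all add: swap_pairs_Cons)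
    have nadj: "\<forall>p \<in> set (swap_pairs z j). snd p \<noteq> fst p + 1" using f by (simp add: filter_empty_conv)
    let ?F = "scaled_diff (pos j ?u) (pos j ?v) (of_int (?v - ?u)) :: 'k kexp"
    have fr: "fold stp z r = pos j ?u" "fold stp z (r + 1) = pos j ?v"
      using pos_swaps[OF ok(3) assms(2) L(2)] pos_swaps[OF ok(3) assms(2) L(3)] L(4,5) by auto
    have "Times (psis (rev (r # z))) (Times (psis (r # z)) ?E) \<approx>
      Times ?R (Times (scaled_diff r (r + 1) (of_int (?v - ?u))) (Times ?P ?E))"
      using psis_rev_Cons_psis[where 'k='k, OF Cons.prems(1) assms(2)] by (simp only: Qexp_adjacent[OF True])
    also have "\<dots> \<approx> Times ?R (Times ?P (Times ?F ?E))"
      by (rule keq_times_right, subst fr(1)[symmetric], subst fr(2)[symmetric], rule scaled_diff_psis[OF ok(3) assms(2)])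
    also have "\<dots> \<approx> Times ?R (Times ?P (Times ?E ?F))" by (rule keq_times_right, rule keq_times_right, rule commutes_E_scaled_diff[OF assms(2), unfolded commutes_E_def])
    also have "\<dots> \<approx> Times ?R (Times (Times ?P ?E) ?F)" by (rule keq_times_right, rule keq_times_assoc')
    also have "\<dots> \<approx> Times (Times ?R (Times ?P ?E)) ?F" by (rule keq_times_assoc')
    also have "\<dots> \<approx> Times ?E ?F" by (rule keq_times_left, rule psis_rev_psis_no_adjacent[OF ok(3) assms(2) nadj])
    also have "\<dots> \<approx> Times ?F ?E" by (rule keq.sym, rule commutes_E_scaled_diff[OF assms(2), unfolded commutes_E_def])
    also have "\<dots> \<approx> Times ?M ?E" by (rule keq_times_left, rule scaled_diff_adjacent[OF True op])
    finally show ?thesis .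
  next
    case False
    have q: "Qexp ?u ?v r = (One :: 'k kexp)" by (rule Qexp_non_adjacent[OF L(1) False])
    have f: "filter (\<lambda>p. snd p = fst p + 1) (swap_pairs z j) = [(x0, x0 + 1)]"
      using Cons.prems(2) False by (simp add: swap_pairs_Cons)
    have "Times (psis (rev (r # z))) (Times (psis (r # z)) ?E) \<approx> Times ?R (Times One (Times ?P ?E))"
      using psis_rev_Cons_psis[where 'k='k, OF Cons.prems(1) assms(2)] by (simp only: q)
    also have "\<dots> \<approx> Times ?R (Times ?P ?E)" by (rule keq_times_right, rule keq.times_one_l)
    also have "\<dots> \<approx> Times ?M ?E" by (rule Cons.IH[OF ok(3) f])
    finally show ?thesis .
  qed
qed

lemma psis_Cons_Cons_E: "Times (psis (a # b # z)) X \<approx> Times (Psi a) (Times (Psi b) (Times (psis z) X))"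
proof -
  have "Times (psis (a # b # z)) X \<approx> Times (Psi a) (Times (psis (b # z)) X)" unfolding psis_Cons by (rule keq.times_assoc)
  also have "\<dots> \<approx> Times (Psi a) (Times (Psi b) (Times (psis z) X))" unfolding psis_Cons by (rule keq_times_right, rule keq.times_assoc)
  finally show ?thesis .
qed

lemma psis_Cons_E: "Times (psis (a # z)) X \<approx> Times (Psi a) (Times (psis z) X)"
  unfolding psis_Cons by (rule keq.times_assoc)

subsection \<open>Matsumoto's theorem\<close>

lemma matsumoto_commute_step:
  assumes A: "A \<in> words \<theta>" and u: "reduced_on (size \<theta>) A (r # x)" and v: "reduced_on (size \<theta>) A (t # y)"
    and e: "swaps (r # x) A = swaps (t # y) A" and rt: "r + 2 \<le> t \<or> t + 2 \<le> r"
    and IH: "\<And>u v. reduced_on (size \<theta>) A u \<Longrightarrow> reduced_on (size \<theta>) A v \<Longrightarrow> swaps u A = swaps v A \<Longrightarrow> length u = length x \<Longrightarrow>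
        Times (psis u) (E A) \<approx> (Times (psis v) (E A) :: 'k::comm_ring_1 kexp)"
  shows "Times (psis (r # x)) (E A) \<approx> (Times (psis (t # y)) (E A) :: 'k kexp)"
proof -
  note W = words_distinct[OF A] words_length[OF A]
  obtain z where z: "reduced_on (size \<theta>) A (t # z)" "reduced_on (size \<theta>) A (r # z)"
    "swaps (t # z) A = swaps x A" "swaps (r # z) A = swaps y A"
    using reduced_on_exchange_commute[OF W u v e rt] by blast
  have x: "reduced_on (size \<theta>) A x" by (rule reduced_on_Cons(1)[OF W u])
  have lz: "length (r # z) = length x" "length (t # z) = length x"
    using z(1,2,3) x by (auto simp: reduced_on_def)
  let ?P = "psis z :: 'k kexp" and ?E = "E A :: 'k kexp"
  have "Times (psis (r # x)) ?E \<approx> Times (Psi r) (Times (psis x) ?E)" by (rule psis_Cons_E)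
  also have "\<dots> \<approx> Times (Psi r) (Times (psis (t # z)) ?E)"
    by (rule keq_times_right, rule IH[OF x z(1) z(3)[symmetric] HOL.refl])
  also have "\<dots> \<approx> Times (Psi r) (Times (Psi t) (Times ?P ?E))" by (rule keq_times_right, rule psis_Cons_E)
  also have "\<dots> \<approx> Times (Times (Psi r) (Psi t)) (Times ?P ?E)" by (rule keq_times_assoc')
  also have "\<dots> \<approx> Times (Times (Psi t) (Psi r)) (Times ?P ?E)" by (rule keq_times_left, rule keq.psi_psi) (use rt in auto)
  also have "\<dots> \<approx> Times (Psi t) (Times (Psi r) (Times ?P ?E))" by (rule keq.times_assoc)
  also have "\<dots> \<approx> Times (Psi t) (Times (psis (r # z)) ?E)" by (rule keq_times_right, rule keq.sym, rule psis_Cons_E)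
  also have "\<dots> \<approx> Times (Psi t) (Times (psis y) ?E)"
    by (rule keq_times_right, rule IH[OF z(2) reduced_on_Cons(1)[OF W v] z(4) lz(1)])
  also have "\<dots> \<approx> Times (psis (t # y)) ?E" by (rule keq.sym, rule psis_Cons_E)
  finally show ?thesis .
qed

lemma braid_psis: assumes "valid_swaps (size \<theta>) z" "A \<in> words \<theta>" "1 \<le> r" "r + 2 \<le> size \<theta>"
  shows "Times (Psi (r + 1)) (Times (Psi r) (Times (Psi (r + 1)) (Times (psis z) (E A)))) \<approx>
     (Times (Psi r) (Times (Psi (r + 1)) (Times (Psi r) (Times (psis z) (E A)))) :: 'k::comm_ring_1 kexp)"
proof -
  define C where "C = swaps z A"
  have wC: "C \<in> words \<theta>" unfolding C_def by (rule swaps_words[OF assms(1,2)])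
  have ne: "C ! (r - 1) \<noteq> C ! (r + 1)" using words_distinct[OF wC] words_length[OF wC] assms(3,4)
      nth_eq_iff_index_eq[of C "r - 1" "r + 1"] by auto
  have bz: "braidcorr (lt C r) (lt C (r + 1)) (lt C (r + 2)) = (Zero :: 'k kexp)"
    unfolding braidcorr_def using ne by simp
  let ?P = "psis z :: 'k kexp" and ?E = "E A :: 'k kexp" and ?EC = "E C :: 'k kexp"
  let ?a = "Psi (r + 1) :: 'k kexp" and ?b = "Psi r :: 'k kexp"
  have pe: "Times ?P ?E \<approx> Times ?EC ?P" unfolding C_def by (rule psis_E[OF assms(1,2)])
  have "Times ?a (Times ?b (Times ?a (Times ?P ?E))) \<approx> Times ?a (Times ?b (Times ?a (Times ?EC ?P)))"
    by (rule keq_times_right, rule keq_times_right, rule keq_times_right, rule pe)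
  also have "\<dots> \<approx> Times (Times (Times (Times ?a ?b) ?a) ?EC) ?P" by (rule keq_times_assoc4)
  also have "\<dots> \<approx> Times (Times (Plus (Times (Times ?b ?a) ?b) (braidcorr (lt C r) (lt C (r + 1)) (lt C (r + 2)))) ?EC) ?P"
    by (rule keq_times_left, rule keq.braid) (use wC assms in auto)
  also have "\<dots> = Times (Times (Plus (Times (Times ?b ?a) ?b) Zero) ?EC) ?P" by (simp only: bz)
  also have "\<dots> \<approx> Times (Times (Times (Times ?b ?a) ?b) ?EC) ?P" by (rule keq_times_left, rule keq_times_left, rule keq.plus_zero)
  also have "\<dots> \<approx> Times ?b (Times ?a (Times ?b (Times ?EC ?P)))" by (rule keq.sym, rule keq_times_assoc4)
  also have "\<dots> \<approx> Times ?b (Times ?a (Times ?b (Times ?P ?E)))" by (rule keq_times_right, rule keq_times_right, rule keq_times_right, rule keq.sym, rule pe)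
  finally show ?thesis .
qed

lemma matsumoto_braid_step:
  assumes A: "A \<in> words \<theta>" and u: "reduced_on (size \<theta>) A (r # x)" and v: "reduced_on (size \<theta>) A ((r + 1) # y)"
    and e: "swaps (r # x) A = swaps ((r + 1) # y) A"
    and IH: "\<And>u v. reduced_on (size \<theta>) A u \<Longrightarrow> reduced_on (size \<theta>) A v \<Longrightarrow> swaps u A = swaps v A \<Longrightarrow> length u = length x \<Longrightarrow>
        Times (psis u) (E A) \<approx> (Times (psis v) (E A) :: 'k::comm_ring_1 kexp)"
  shows "Times (psis (r # x)) (E A) \<approx> (Times (psis ((r + 1) # y)) (E A) :: 'k kexp)"
proof -
  note W = words_distinct[OF A] words_length[OF A]
  obtain z where z: "reduced_on (size \<theta>) A ((r + 1) # r # z)" "reduced_on (size \<theta>) A (r # (r + 1) # z)"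
    "swaps ((r + 1) # r # z) A = swaps x A" "swaps (r # (r + 1) # z) A = swaps y A"
    using reduced_on_exchange_braid[OF W u v e] by blast
  have x: "reduced_on (size \<theta>) A x" by (rule reduced_on_Cons(1)[OF W u])
  have lz: "length (r # (r + 1) # z) = length x"
    using z(1,3) x by (auto simp: reduced_on_def)
  have ok: "valid_swaps (size \<theta>) z" "1 \<le> r" "r + 2 \<le> size \<theta>" using z(1) by (auto simp: reduced_on_def)
  let ?P = "psis z :: 'k kexp" and ?E = "E A :: 'k kexp"
  have "Times (psis (r # x)) ?E \<approx> Times (Psi r) (Times (psis x) ?E)" by (rule psis_Cons_E)
  also have "\<dots> \<approx> Times (Psi r) (Times (psis ((r + 1) # r # z)) ?E)"
    by (rule keq_times_right, rule IH[OF x z(1) z(3)[symmetric] HOL.refl])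
  also have "\<dots> \<approx> Times (Psi r) (Times (Psi (r + 1)) (Times (Psi r) (Times ?P ?E)))" by (rule keq_times_right, rule psis_Cons_Cons_E)
  also have "\<dots> \<approx> Times (Psi (r + 1)) (Times (Psi r) (Times (Psi (r + 1)) (Times ?P ?E)))"
    by (rule keq.sym, rule braid_psis[OF ok(1) A ok(2,3)])
  also have "\<dots> \<approx> Times (Psi (r + 1)) (Times (psis (r # (r + 1) # z)) ?E)" by (rule keq_times_right, rule keq.sym, rule psis_Cons_Cons_E)
  also have "\<dots> \<approx> Times (Psi (r + 1)) (Times (psis y) ?E)"
    by (rule keq_times_right, rule IH[OF z(2) reduced_on_Cons(1)[OF W v] z(4) lz])
  also have "\<dots> \<approx> Times (psis ((r + 1) # y)) ?E" by (rule keq.sym, rule psis_Cons_E)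
  finally show ?thesis .
qed

lemma matsumoto:
  assumes A: "A \<in> words \<theta>"
    and "reduced_on (size \<theta>) A u" "reduced_on (size \<theta>) A v" "swaps u A = swaps v A"
  shows "Times (psis u) (E A) \<approx> (Times (psis v) (E A) :: 'k::comm_ring_1 kexp)"
  using assms(2-4)
proof (induction "length u" arbitrary: u v rule: less_induct)
  case less
  have lv: "length v = length u" using less.prems by (simp add: reduced_on_def)
  show ?case
  proof (cases u)
    case Nil
    then show ?thesis using lv by (simp add: keq.refl)
  next
    case (Cons r x)
    then obtain t y where v: "v = t # y" using lv by (cases v) auto
    have IH: "Times (psis u') (E A) \<approx> (Times (psis v') (E A) :: 'k kexp)"
      if "reduced_on (size \<theta>) A u'" "reduced_on (size \<theta>) A v'" "swaps u' A = swaps v' A"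
        "length u' = length x" for u' v'
      using less.hyps[OF _ that(1-3)] that(4) Cons by simp
    have IH': "Times (psis u') (E A) \<approx> (Times (psis v') (E A) :: 'k kexp)"
      if "reduced_on (size \<theta>) A u'" "reduced_on (size \<theta>) A v'" "swaps u' A = swaps v' A"
        "length u' = length y" for u' v'
      using IH[OF that(1-3)] that(4) lv Cons v by simp
    note hu = less.prems(1)[unfolded Cons] and hv = less.prems(2)[unfolded v]
      and he = less.prems(3)[unfolded Cons v]
    consider "r = t" | "r + 2 \<le> t \<or> t + 2 \<le> r" | "t = r + 1" | "r = t + 1" by linarith
    then show ?thesis
    proof cases
      case 1
      note W = words_distinct[OF A] words_length[OF A]
      have "swaps x A = swaps y A" using reduced_on_Cons(3)[OF W hu] reduced_on_Cons(3)[OF W hv] he 1 by simp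
      then have "Times (psis x) (E A) \<approx> (Times (psis y) (E A) :: 'k kexp)"
        using IH[OF reduced_on_Cons(1)[OF W hu] reduced_on_Cons(1)[OF W hv]] by simp
      then show ?thesis unfolding Cons v 1 using psis_Cons_E keq_times_right keq.sym keq.trans by metis
    next
      case 2
      show ?thesis unfolding Cons v by (rule matsumoto_commute_step[OF A hu hv he 2 IH])
    next
      case 3
      show ?thesis unfolding Cons v 3 by (rule matsumoto_braid_step[OF A hu hv[unfolded 3] he[unfolded 3] IH])
    next
      case 4
      have "Times (psis (t # y)) (E A) \<approx> (Times (psis ((t + 1) # x)) (E A) :: 'k kexp)"
        by (rule matsumoto_braid_step[OF A hv hu[unfolded 4] he[unfolded 4, symmetric] IH'])
      then show ?thesis unfolding Cons v 4 by (rule keq.sym)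
    qed
  qed
qed

lemma diff_psis_pos: assumes "valid_swaps (size \<theta>) z" "j \<in> words \<theta>" "x \<in> set j" "y \<in> set j"
  shows "Times (Minus (Y (pos (swaps z j) x)) (Y (pos (swaps z j) y))) (Times (psis z) (E j)) \<approx>
         (Times (psis z) (Times (Minus (Y (pos j x)) (Y (pos j y))) (E j)) :: 'k::comm_ring_1 kexp)"
  using diff_psis[OF assms(1,2), of "pos (swaps z j) x" "pos (swaps z j) y"]
  unfolding pos_swaps[OF assms(1,2,3)] pos_swaps[OF assms(1,2,4)] .

lemma matsumoto_split:
  assumes "j \<in> words \<theta>" "reduced_on (size \<theta>) j x" "reduced_on (size \<theta>) j (z @ y)"
    and "swaps x j = swaps (z @ y) j"
  shows "Times (psis x) (E j) \<approx> (Times (psis z) (Times (psis y) (E j)) :: 'k::comm_ring_1 kexp)"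
proof -
  have "Times (psis x) (E j) \<approx> (Times (psis (z @ y)) (E j) :: 'k kexp)" by (rule matsumoto[OF assms])
  also have "\<dots> \<approx> Times (Times (psis z) (psis y)) (E j)" by (rule keq_times_left, rule psis_append)
  also have "\<dots> \<approx> Times (psis z) (Times (psis y) (E j))" by (rule keq.times_assoc)
  finally show ?thesis .
qed

lemma matsumoto_sandwich:
  assumes "valid_swaps (size \<theta>) z" "j \<in> words \<theta>"
    and "reduced_on (size \<theta>) (swaps z j) u" "reduced_on (size \<theta>) (swaps z j) v"
    and "swaps u (swaps z j) = swaps v (swaps z j)"
  shows "Times (psis u) (Times (psis z) (E j)) \<approx> (Times (psis v) (Times (psis z) (E j)) :: 'k::comm_ring_1 kexp)"
proof -
  let ?E = "E (swaps z j) :: 'k kexp"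
  have "Times (psis u) (Times (psis z) (E j)) \<approx> Times (psis u) (Times ?E (psis z))"
    by (rule keq_times_right, rule psis_E[OF assms(1,2)])
  also have "\<dots> \<approx> Times (Times (psis u) ?E) (psis z)" by (rule keq_times_assoc')
  also have "\<dots> \<approx> Times (Times (psis v) ?E) (psis z)"
    by (rule keq_times_left, rule matsumoto[OF swaps_words[OF assms(1,2)] assms(3-5)])
  also have "\<dots> \<approx> Times (psis v) (Times ?E (psis z))" by (rule keq.times_assoc)
  also have "\<dots> \<approx> Times (psis v) (Times (psis z) (E j))"
    by (rule keq_times_right, rule keq.sym, rule psis_E[OF assms(1,2)])
  finally show ?thesis .
qed

lemma psis_product_transport:
  assumes y: "valid_swaps (size \<theta>) y" and j: "j \<in> words \<theta>" "p \<in> set j" "q \<in> set j"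
    and v: "Times v (E j) \<approx> Times (psis z) (Times (psis y) (E j))"
    and u: "Times u (Times (psis z) (E (swaps y j))) \<approx>
      Times (Minus (Y (pos (swaps y j) p)) (Y (pos (swaps y j) q))) (E (swaps y j))"
  shows "Times (Times u v) (E j) \<approx>
    (Times (Times (psis y) (Minus (Y (pos j p)) (Y (pos j q)))) (E j) :: 'k::comm_ring_1 kexp)"
proof -
  let ?E = "E (swaps y j) :: 'k kexp" and ?M = "\<lambda>w. Minus (Y (pos w p)) (Y (pos w q)) :: 'k kexp"
  note yE = psis_E[OF y j(1)]
  have "Times (Times u v) (E j) \<approx> Times u (Times v (E j))" by (rule keq.times_assoc)
  also have "\<dots> \<approx> Times u (Times (psis z) (Times (psis y) (E j)))" by (rule keq_times_right[OF v])
  also have "\<dots> \<approx> Times u (Times (psis z) (Times ?E (psis y)))" by (intro keq_times_right yE)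
  also have "\<dots> \<approx> Times (Times u (Times (psis z) ?E)) (psis y)"
    by (meson keq.trans keq_times_assoc' keq_times_right)
  also have "\<dots> \<approx> Times (Times (?M (swaps y j)) ?E) (psis y)" by (rule keq_times_left[OF u])
  also have "\<dots> \<approx> Times (?M (swaps y j)) (Times (psis y) (E j))"
    by (meson keq.sym keq.times_assoc keq.trans keq_times_right yE)
  also have "\<dots> \<approx> Times (psis y) (Times (?M j) (E j))" by (rule diff_psis_pos[OF y j])
  also have "\<dots> \<approx> Times (Times (psis y) (?M j)) (E j)" by (rule keq_times_assoc')
  finally show ?thesis .
qed

end

section \<open>The refinement formula\<close>

lemma theta_multiplicity_free: "klr_multiplicity_free (theta a b)"
proof
  fix x
  have "distinct [a..b + 1]" by simp
  then show "count (theta a b) x \<le> 1" unfolding theta_def by (simp add: distinct_count_atmost_1)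
qed

lemma size_theta: "size (theta a b) = nat (b + 2 - a)"
  by (simp add: theta_def)

lemma jw_KP: assumes "\<rho> \<in> KP a b"
  shows "jw \<rho> \<in> words (theta a b)" "distinct (jw \<rho>)" "set (jw \<rho>) = {a..b + 1}"
    "length (jw \<rho>) = nat (b + 2 - a)"
proof -
  show d: "distinct (jw \<rho>)" and s: "set (jw \<rho>) = {a..b + 1}" using assms by (auto simp: KP_def)
  then have "mset (jw \<rho>) = mset [a..b + 1]" using set_eq_iff_mset_eq_distinct[of "jw \<rho>" "[a..b + 1]"] by simp
  then show "jw \<rho> \<in> words (theta a b)" by (simp add: words_def theta_def)
  show "length (jw \<rho>) = nat (b + 2 - a)" using distinct_card[OF d] s by simp
qed

lemma reduced_expr_wperm:
  assumes "\<tau> \<in> KP a b" "\<pi> \<in> KP a b"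
    and "reduced_expr (nat (b + 2 - a)) rs (wperm (nat (b + 2 - a)) \<tau> \<pi>)"
  shows "reduced_on (nat (b + 2 - a)) (jw \<pi>) rs" "swaps rs (jw \<pi>) = jw \<tau>"
proof -
  let ?l = "nat (b + 2 - a)"
  have "\<exists>!w. w \<in> perms ?l \<and> pact w (jw \<pi>) = jw \<tau>"
    by (rule ex1_perm_pact) (use jw_KP[OF assms(1)] jw_KP[OF assms(2)] in auto)
  then have w: "wperm ?l \<tau> \<pi> \<in> perms ?l" "pact (wperm ?l \<tau> \<pi>) (jw \<pi>) = jw \<tau>"
    unfolding wperm_def by (rule theI'[THEN conjunct1], rule theI'[THEN conjunct2])
  show "reduced_on ?l (jw \<pi>) rs" "swaps rs (jw \<pi>) = jw \<tau>"
    using reduced_expr_reduced_on[OF jw_KP(2,4)[OF assms(2)] assms(3) w(1)] w(2) by auto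
qed

lemma distinct_set_singleton: assumes d: "distinct xs" and s: "set xs = {a}" shows "xs = [a]"
proof -
  have "length xs = 1" using distinct_card[OF d] s by simp
  then obtain y where y: "xs = [y]" by (auto simp: length_Suc_conv)
  then show ?thesis using s by simp
qed

lemma psis_rev_psis_refn:
  assumes "\<tau> \<in> KP a b" "\<pi> \<in> KP a b" "Cset \<tau> = Cset \<pi> \<union> {i}" "i \<notin> Cset \<pi>" "i \<in> {a..b}"
    and "reduced_on (nat (b + 2 - a)) (jw \<tau>) z" "swaps z (jw \<tau>) = jw \<pi>"
  shows "keq (theta a b) (Times (psis (rev z)) (Times (psis z) (E (jw \<tau>))))
           (Times (Minus (Y (pos (jw \<tau>) i)) (Y (pos (jw \<tau>) (i + 1)))) (E (jw \<tau>)) :: 'k::comm_ring_1 kexp)"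
proof -
  interpret klr_multiplicity_free "theta a b" by (rule theta_multiplicity_free)
  note T = jw_KP[OF assms(1)]
  have z: "valid_swaps (length (jw \<tau>)) z" "length z = n_inv (jw \<tau>) (swaps z (jw \<tau>))"
    using assms(6) T(4) by (auto simp: reduced_on_def)
  note P = swap_pairs_reduced[OF T(2) z]
  have "valid_swaps (size (theta a b)) z" using z(1) T(1) words_length by simp
  moreover have "filter (\<lambda>p. snd p = fst p + 1) (swap_pairs z (jw \<tau>)) = [(i, i + 1)]"
    by (rule distinct_set_singleton) (use P adjacent_inv_set_refn[OF assms(1-5)] assms(7) in auto)
  ultimately show ?thesis by (rule psis_rev_psis_one_adjacent[OF _ T(1)])
qed

lemma psis_wperm_refn:
  assumes "\<tau> \<in> KP a b" "\<pi> \<in> KP a b" "Cset \<tau> = Cset \<pi> \<union> {i}" "i \<notin> Cset \<pi>" "i \<in> {a..b}"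
    and "reduced_expr (nat (b + 2 - a)) rs (wperm (nat (b + 2 - a)) \<tau> \<pi>)"
    and "reduced_on (nat (b + 2 - a)) (jw \<tau>) z" "swaps z (jw \<tau>) = jw \<pi>"
  shows "keq (theta a b) (Times (psis rs) (Times (psis z) (E (jw \<tau>))))
           (Times (Minus (Y (pos (jw \<tau>) i)) (Y (pos (jw \<tau>) (i + 1)))) (E (jw \<tau>)) :: 'k::comm_ring_1 kexp)"
proof -
  interpret klr_multiplicity_free "theta a b" by (rule theta_multiplicity_free)
  note T = jw_KP[OF assms(1)] and R = reduced_expr_wperm[OF assms(1,2,6)]
  note size = size_theta[of a b]
  have "keq (theta a b) (Times (psis rs) (Times (psis z) (E (jw \<tau>))))
      (Times (psis (rev z)) (Times (psis z) (E (jw \<tau>))) :: 'k kexp)"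
  proof (rule matsumoto_sandwich[OF _ T(1)])
    have "valid_swaps (length (jw \<tau>)) z" using assms(7) T(4) by (simp add: reduced_on_def)
    then show "swaps rs (swaps z (jw \<tau>)) = swaps (rev z) (swaps z (jw \<tau>))"
      using swaps_rev R(2) assms(8) by metis
  qed (use assms(7,8) R reduced_on_rev[OF T(4) assms(7)] size in \<open>auto simp: reduced_on_def\<close>)
  also have "keq (theta a b) \<dots> (Times (Minus (Y (pos (jw \<tau>) i)) (Y (pos (jw \<tau>) (i + 1)))) (E (jw \<tau>)))"
    by (rule psis_rev_psis_refn[OF assms(1-5,7,8)])
  finally show ?thesis .
qed

lemma psis_wperm_factor:
  assumes "\<sigma> \<in> KP a b" "\<tau> \<in> KP a b" "\<pi> \<in> KP a b" "Cset \<pi> \<subseteq> Cset \<tau>" "Cset \<tau> \<subseteq> Cset \<sigma>"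
    and "reduced_expr (nat (b + 2 - a)) rs (wperm (nat (b + 2 - a)) \<pi> \<sigma>)"
    and "reduced_expr (nat (b + 2 - a)) rs' (wperm (nat (b + 2 - a)) \<tau> \<sigma>)"
    and "reduced_on (nat (b + 2 - a)) (jw \<tau>) z" "swaps z (jw \<tau>) = jw \<pi>"
  shows "keq (theta a b) (Times (psis rs) (E (jw \<sigma>)))
           (Times (psis z) (Times (psis rs') (E (jw \<sigma>))) :: 'k::comm_ring_1 kexp)"
proof -
  interpret klr_multiplicity_free "theta a b" by (rule theta_multiplicity_free)
  note size = size_theta[of a b]
  note R = reduced_expr_wperm[OF assms(3,1,6), folded size]
    and R' = reduced_expr_wperm[OF assms(2,1,7), folded size]
  have "n_inv (jw \<sigma>) (jw \<pi>) = n_inv (jw \<sigma>) (jw \<tau>) + n_inv (jw \<tau>) (jw \<pi>)"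
    by (rule n_inv_KP_add[OF assms(1-5)])
  then have "reduced_on (size (theta a b)) (jw \<sigma>) (z @ rs')"
    using reduced_on_append[OF R'(1)] R'(2) assms(8,9) size by simp
  moreover have "swaps rs (jw \<sigma>) = swaps (z @ rs') (jw \<sigma>)"
    using R(2) R'(2) assms(9) by (simp add: swaps_append)
  ultimately show ?thesis by (rule matsumoto_split[OF jw_KP(1)[OF assms(1)] R(1)])
qed

lemma idx_pos: "idx \<sigma> i = pos (jw \<sigma>) i" by (simp add: idx_def pos_def)

theorem mainTheorem8:
  fixes a b i :: int and \<pi> \<sigma> :: "(int \<times> int) list"
    and rs1 rs2 rs3 :: "nat list" and k_type :: "'k::idom itself"
  defines "l \<equiv> nat (b + 2 - a)"
  assumes pid: "is_PID k_type"
    and ab: "a \<le> b + 1"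
    and pi: "\<pi> \<in> KP a b" and sigma: "\<sigma> \<in> KP a b"
    and i: "i \<in> {a..b}" "i \<notin> Cset \<pi>"
    and contains: "kp_contains \<sigma> (refn a b i \<pi>)"
    and r1: "reduced_expr l rs1 (wperm l (refn a b i \<pi>) \<pi>)"
    and r2: "reduced_expr l rs2 (wperm l \<pi> \<sigma>)"
    and r3: "reduced_expr l rs3 (wperm l (refn a b i \<pi>) \<sigma>)"
  shows "keq (theta a b)
           (Times (Times (psis rs1 :: 'k kexp) (psis rs2)) (E (jw \<sigma>)))
           (Times (Times (psis rs3) (Minus (Y (idx \<sigma> i)) (Y (idx \<sigma> (i + 1))))) (E (jw \<sigma>)))"
proof -
  interpret klr_multiplicity_free "theta a b" by (rule theta_multiplicity_free)
  define \<tau> where "\<tau> = refn a b i \<pi>"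
  have tau: "\<tau> \<in> KP a b" "Cset \<tau> = Cset \<pi> \<union> {i}" using refn_props[OF pi i] unfolding \<tau>_def by auto
  note S = jw_KP[OF sigma] and P = jw_KP[OF pi] and T = jw_KP[OF tau(1)]
  obtain z where z: "reduced_on l (jw \<tau>) z" "swaps z (jw \<tau>) = jw \<pi>"
    using exists_reduced_on[OF T(2) P(2)] T(3,4) P(3) l_def by auto
  have R3: "reduced_on (size (theta a b)) (jw \<sigma>) rs3" "swaps rs3 (jw \<sigma>) = jw \<tau>"
    using reduced_expr_wperm[OF tau(1) sigma r3[folded \<tau>_def, unfolded l_def]] unfolding size_theta by blast+
  show ?thesis unfolding idx_pos
  proof (rule psis_product_transport[OF _ S(1)])
    show "keq (theta a b) (Times (psis rs2) (E (jw \<sigma>))) (Times (psis z) (Times (psis rs3) (E (jw \<sigma>))))"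
      by (rule psis_wperm_factor[OF sigma tau(1) pi _ _ r2[unfolded l_def] r3[folded \<tau>_def, unfolded l_def] z[unfolded l_def]])
        (use tau contains in \<open>auto simp: kp_contains_def \<tau>_def\<close>)
    show "keq (theta a b) (Times (psis rs1) (Times (psis z) (E (swaps rs3 (jw \<sigma>)))))
      (Times (Minus (Y (pos (swaps rs3 (jw \<sigma>)) i)) (Y (pos (swaps rs3 (jw \<sigma>)) (i + 1)))) (E (swaps rs3 (jw \<sigma>))))"
      unfolding R3(2) by (rule psis_wperm_refn[OF tau(1) pi tau(2) i(2,1) r1[folded \<tau>_def, unfolded l_def] z[unfolded l_def]])
  qed (use R3 S(3) i(1) in \<open>auto simp: reduced_on_def\<close>)
qed

end
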